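(* Let $\mathbf g=sl_2(\mathbb R)\ltimes\mathbb R^3$ with basis $e_1,\dots,e_6$ and brackets $[e_1,e_2]=e_6$, $[e_1,e_3]=e_5$, $[e_2,e_3]=e_4$, $[e_5,e_4]=-e_6$, $[e_1,e_4]=[e_1,e_5]=[e_1,e_6]=[e_2,e_5]=[e_3,e_6]=[e_6,e_5]=0$, $[e_2,e_6]=[e_3,e_5]=-e_1$, $[e_2,e_4]=e_3$, $[e_3,e_4]=-e_2$, $[e_6,e_4]=e_5$. If $\mathbf h$ is a $3$-dimensional subalgebra containing no nonzero ideal of $\mathbf g$ and $\mathbf m$ is a $3$-dimensional complement of $\mathbf h$ generating $\mathbf g$ with $[\mathbf h,\mathbf m]\subseteq\mathbf m$, then up to conjugation one of the following holds: (i) $\mathbf h=\langle e_1,e_2,e_6\rangle$ and $\mathbf m=\langle e_5,\ e_3-b_3e_1-b_2e_6,\ e_4+b_2e_1+b_3e_6\rangle$ with $b_2,b_3\in\mathbb R$; (ii) $\mathbf h=\langle e_2,e_3,e_4\rangle$ and $\mathbf m=\langle e_1+a e_4,\ e_6-a e_3,\ e_5+a e_2\rangle$ with $a\in\mathbb R\setminus\{0\}$; (iii) $\mathbf h=\langle e_4,e_5,e_6\rangle$ and $\mathbf m=\langle e_1,\ e_2+b_1e_6+b_2e_5,\ e_3-b_2e_6+b_1e_5\rangle$ with $b_1,b_2\in\mathbb R$.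
   Context: $\mathbf g$ is the Lie algebra of the group of pairs $(A,X)$, $A\in SL_2(\mathbb R)$ (or $PSL_2(\mathbb R)$), $X$ a real traceless $2\times 2$ matrix, with multiplication $(A_1,X_1)(A_2,X_2)=(A_1A_2,A_2^{-1}X_1A_2+X_2)$. The basis is $e_1=(0,\begin{pmatrix}0&-1\\1&0\end{pmatrix})$, $e_2=(\begin{pmatrix}1&0\\0&-1\end{pmatrix},0)$, $e_3=(\begin{pmatrix}0&1\\1&0\end{pmatrix},0)$, $e_4=(\begin{pmatrix}0&1\\-1&0\end{pmatrix},0)$, $e_5=(0,\begin{pmatrix}-1&0\\0&1\end{pmatrix})$, $e_6=(0,\begin{pmatrix}0&1\\1&0\end{pmatrix})$. *)

theory Defs
  imports "HOL-Analysis.Analysis"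
begin

text \<open>The Lie algebra g = sl2(R) semidirect R^3, modelled on real^6 in the basis e_1..e_6.\<close>

definition e :: "6 \<Rightarrow> real^6" where
  "e i = axis i 1"

definition sc :: "6 \<Rightarrow> 6 \<Rightarrow> real^6" where
  "sc i j =
    (if i = 1 \<and> j = 2 then e 6 else if i = 2 \<and> j = 1 then - e 6
     else if i = 1 \<and> j = 3 then e 5 else if i = 3 \<and> j = 1 then - e 5
     else if i = 2 \<and> j = 3 then e 4 else if i = 3 \<and> j = 2 then - e 4
     else if i = 5 \<and> j = 4 then - e 6 else if i = 4 \<and> j = 5 then e 6
     else if i = 2 \<and> j = 6 then - e 1 else if i = 6 \<and> j = 2 then e 1
     else if i = 3 \<and> j = 5 then - e 1 else if i = 5 \<and> j = 3 then e 1
     else if i = 2 \<and> j = 4 then e 3 else if i = 4 \<and> j = 2 then - e 3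
     else if i = 3 \<and> j = 4 then - e 2 else if i = 4 \<and> j = 3 then e 2
     else if i = 6 \<and> j = 4 then e 5 else if i = 4 \<and> j = 6 then - e 5
     else 0)"

definition lie_br :: "real^6 \<Rightarrow> real^6 \<Rightarrow> real^6" where
  "lie_br x y = (\<Sum>i\<in>UNIV. \<Sum>j\<in>UNIV. (x$i * y$j) *\<^sub>R sc i j)"

definition is_subalgebra :: "(real^6) set \<Rightarrow> bool" where
  "is_subalgebra S \<longleftrightarrow> subspace S \<and> (\<forall>x\<in>S. \<forall>y\<in>S. lie_br x y \<in> S)"

definition is_ideal :: "(real^6) set \<Rightarrow> bool" where
  "is_ideal I \<longleftrightarrow> subspace I \<and> (\<forall>x. \<forall>y\<in>I. lie_br x y \<in> I)"

definition generates :: "(real^6) set \<Rightarrow> bool" where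
  "generates M \<longleftrightarrow> (\<forall>S. is_subalgebra S \<and> M \<subseteq> S \<longrightarrow> S = UNIV)"

text \<open>The concrete group model: pairs (A,X), A in SL_2(R), X traceless,
  product (A1,X1)(A2,X2) = (A1 A2, A2^-1 X1 A2 + X2).
  Its Lie algebra consists of pairs (U,V) of traceless matrices; the adjoint action is
  Ad_(A,X)(U,V) = (A U A^-1, A (X U - U X + V) A^-1).\<close>

definition mat2 :: "real \<Rightarrow> real \<Rightarrow> real \<Rightarrow> real \<Rightarrow> real^2^2" where
  "mat2 a b c d = (\<chi> i j. if i = 1 then (if j = 1 then a else b) else (if j = 1 then c else d))"

definition to_pair :: "real^6 \<Rightarrow> (real^2^2) \<times> (real^2^2)" where
  "to_pair v =
    (v$2 *\<^sub>R mat2 1 0 0 (-1) + v$3 *\<^sub>R mat2 0 1 1 0 + v$4 *\<^sub>R mat2 0 1 (-1) 0,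
     v$1 *\<^sub>R mat2 0 (-1) 1 0 + v$5 *\<^sub>R mat2 (-1) 0 0 1 + v$6 *\<^sub>R mat2 0 1 1 0)"

definition from_pair :: "(real^2^2) \<times> (real^2^2) \<Rightarrow> real^6" where
  "from_pair p = (case p of (U, V) \<Rightarrow>
     vector [(V$2$1 - V$1$2) / 2, U$1$1, (U$1$2 + U$2$1) / 2, (U$1$2 - U$2$1) / 2,
             - V$1$1, (V$1$2 + V$2$1) / 2])"

definition Ad :: "real^2^2 \<Rightarrow> real^2^2 \<Rightarrow> real^6 \<Rightarrow> real^6" where
  "Ad A X v = (case to_pair v of (U, V) \<Rightarrow>
     from_pair (A ** U ** matrix_inv A, A ** (X ** U - U ** X + V) ** matrix_inv A))"

end

theory Submission
  imports Defs
begin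

text \<open>The group of pairs \<open>(A, X)\<close> acts on \<open>g\<close> by Lie algebra automorphisms \<open>Ad A X\<close>,
  which preserve all hypotheses and the determinant of the \<open>sl\<^sub>2\<close>-component.
  Since \<open>h\<close> is not the abelian ideal \<open>\<langle>e\<^sub>1, e\<^sub>5, e\<^sub>6\<rangle>\<close>, it contains an element with non-zero
  \<open>sl\<^sub>2\<close>-part, which can be conjugated to \<open>e\<^sub>2 + c e\<^sub>5\<close> (hyperbolic), \<open>e\<^sub>4 + c e\<^sub>1\<close>
  (elliptic, chosen only if \<open>h\<close> has no hyperbolic element) or \<open>e\<^sub>3 + e\<^sub>4 + c (e\<^sub>1 + e\<^sub>6)\<close>
  (if all elements of \<open>h\<close> are nilpotent modulo the ideal).

  In the hyperbolic case the generalised \<open>\<plusminus>1\<close>-eigenspaces \<open>\<langle>e\<^sub>1 \<mp> e\<^sub>6, e\<^sub>3 \<plusminus> e\<^sub>4\<rangle>\<close> of its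
  adjoint map are invariant under \<open>h\<close> and \<open>m\<close>, so each of them lies in \<open>h\<close> or in \<open>m\<close> whenever
  it is a Jordan block; dimension counting and the fact that \<open>m\<close> is not a subalgebra then force
  \<open>c = 0\<close> and \<open>e\<^sub>5 \<notin> h\<close>, and finally \<open>h = \<langle>e\<^sub>1, e\<^sub>2, e\<^sub>6\<rangle>\<close> or, after a translation,
  \<open>h = \<langle>e\<^sub>2, e\<^sub>3, e\<^sub>4\<rangle>\<close>. In the elliptic case the absence of hyperbolic elements gives
  \<open>h = \<langle>e\<^sub>4 + c e\<^sub>1, e\<^sub>5, e\<^sub>6\<rangle>\<close> and then \<open>c = 0\<close>; the nilpotent case is impossible.
  Once \<open>h\<close> is a coordinate subalgebra, \<open>m\<close> is spanned by lifts of the complementary basis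
  vectors, and \<open>[h, m] \<subseteq> m\<close> determines these lifts up to the stated parameters.\<close>

lemma subspace_scaleR_cancel: "subspace S \<Longrightarrow> k *\<^sub>R v \<in> S \<Longrightarrow> k \<noteq> 0 \<Longrightarrow> v \<in> S"
  using subspace_scale[of S "k *\<^sub>R v" "1/k"] by simp

lemma subspace_eq_span_if_card_le_dim:
  fixes S B :: "'a::euclidean_space set"
  assumes "subspace S" "S \<subseteq> span B" "finite B" "card B \<le> dim S"
  shows "S = span B"
proof -
  have "dim (span B) \<le> dim S" using assms(3,4) dim_le_card' dim_span by (metis order.trans)
  then have "span S = span (span B)" using dim_eq_span assms(2) by blast
  then show ?thesis using assms(1) by (metis span_eq_iff span_span)
qed

lemma subspace_eq_span_3:
  fixes S :: "'a::euclidean_space set"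
  assumes "subspace S" "dim S = 3" "S \<subseteq> span {a, b, c}"
  shows "S = span {a, b, c}"
  by (rule subspace_eq_span_if_card_le_dim) (use assms in \<open>auto simp: card_insert_if\<close>)

lemma card_le_dim_if_pairwise_orthogonal:
  fixes S B :: "'a::euclidean_space set"
  assumes "pairwise orthogonal B" "0 \<notin> B" "B \<subseteq> S"
  shows "card B \<le> dim S"
  using independent_card_le_dim assms(3) pairwise_orthogonal_independent[OF assms(1,2)] by blast

lemma subspace_eq_span_if_pairwise_orthogonal:
  fixes S B :: "'a::euclidean_space set"
  assumes "subspace S" "B \<subseteq> S" "pairwise orthogonal B" "0 \<notin> B" "finite B" "dim S \<le> card B"
  shows "S = span B"
proof
  have "independent B" using pairwise_orthogonal_independent assms(3,4) by blast
  then have "card B = dim S" using independent_card_le_dim assms(2,6) by (metis le_antisym)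
  then show "S \<subseteq> span B" using card_eq_dim assms(2,5) \<open>independent B\<close> by blast
  show "span B \<subseteq> S" using assms(1,2) by (rule span_minimal[rotated])
qed

lemma subspace_eq_span_orthogonal_3:
  fixes S :: "'a::euclidean_space set"
  assumes "subspace S" "dim S = 3" "a \<in> S" "b \<in> S" "c \<in> S" "a \<noteq> 0" "b \<noteq> 0" "c \<noteq> 0"
    "orthogonal a b" "orthogonal a c" "orthogonal b c"
  shows "S = span {a, b, c}"
proof (rule subspace_eq_span_if_pairwise_orthogonal)
  have "a \<noteq> b" "a \<noteq> c" "b \<noteq> c" using assms(6-11) orthogonal_self by metis+
  then show "dim S \<le> card {a, b, c}" using assms(2) by simp
  show "pairwise orthogonal {a, b, c}"
    using assms(9-11) by (auto simp: pairwise_insert orthogonal_commute)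
qed (use assms in auto)

lemma UNIV_6: "(UNIV::6 set) = {1,2,3,4,5,6}"
proof -
  have "card {1,2,3,4,5,6::6} = 6" by simp
  then show ?thesis using card_subset_eq[of "UNIV::6 set" "{1,2,3,4,5,6}"] by simp
qed

lemma sum_UNIV_6: "sum f (UNIV::6 set) = f 1 + f 2 + f 3 + f 4 + f 5 + f 6"
  unfolding UNIV_6 by (simp add: ac_simps)

lemma all_6: "(\<forall>i::6. P i) \<longleftrightarrow> P 1 \<and> P 2 \<and> P 3 \<and> P 4 \<and> P 5 \<and> P 6"
  using UNIV_6 by (metis UNIV_I insert_iff empty_iff)

lemma vec6_eq_iff:
  "(x::real^6) = y \<longleftrightarrow> x$1 = y$1 \<and> x$2 = y$2 \<and> x$3 = y$3 \<and> x$4 = y$4 \<and> x$5 = y$5 \<and> x$6 = y$6"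
  by (simp add: vec_eq_iff all_6)

lemma vec3_eq_iff: "(x::real^3) = y \<longleftrightarrow> x$1 = y$1 \<and> x$2 = y$2 \<and> x$3 = y$3"
  by (simp add: vec_eq_iff forall_3)

lemma inner_vec6: "(x::real^6) \<bullet> y = x$1*y$1 + x$2*y$2 + x$3*y$3 + x$4*y$4 + x$5*y$5 + x$6*y$6"
  by (simp add: inner_vec_def sum_UNIV_6)

definition vec6 :: "real \<Rightarrow> real \<Rightarrow> real \<Rightarrow> real \<Rightarrow> real \<Rightarrow> real \<Rightarrow> real^6" where
  "vec6 a1 a2 a3 a4 a5 a6 = (\<chi> i. if i = 1 then a1 else if i = 2 then a2 else if i = 3 then a3
      else if i = 4 then a4 else if i = 5 then a5 else a6)"

lemma vec6_nth [simp]: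
  "vec6 a1 a2 a3 a4 a5 a6 $ 1 = a1" "vec6 a1 a2 a3 a4 a5 a6 $ 2 = a2"
  "vec6 a1 a2 a3 a4 a5 a6 $ 3 = a3" "vec6 a1 a2 a3 a4 a5 a6 $ 4 = a4"
  "vec6 a1 a2 a3 a4 a5 a6 $ 5 = a5" "vec6 a1 a2 a3 a4 a5 a6 $ 6 = a6"
  by (simp_all add: vec6_def)

lemma vector_eq_vec6: "(vector [a1,a2,a3,a4,a5,a6] :: real^6) = vec6 a1 a2 a3 a4 a5 a6"
  by (simp add: vec6_eq_iff vector_def)

lemma e_nth [simp]: "e i $ j = (if j = i then 1 else 0)"
  by (simp add: e_def axis_def)

lemma lie_br_nth [simp]:
  "lie_br x y $ 1 = x$6*y$2 - x$2*y$6 + x$5*y$3 - x$3*y$5"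
  "lie_br x y $ 2 = x$4*y$3 - x$3*y$4"
  "lie_br x y $ 3 = x$2*y$4 - x$4*y$2"
  "lie_br x y $ 4 = x$2*y$3 - x$3*y$2"
  "lie_br x y $ 5 = x$1*y$3 - x$3*y$1 + x$6*y$4 - x$4*y$6"
  "lie_br x y $ 6 = x$1*y$2 - x$2*y$1 + x$4*y$5 - x$5*y$4"
  by (simp_all add: lie_br_def sum_component sum_UNIV_6 sc_def algebra_simps)

lemma lie_br_0_left [simp]: "lie_br 0 x = 0"
  by (simp add: vec6_eq_iff)

lemma lie_br_add_right: "lie_br z (x + y) = lie_br z x + lie_br z y"
  by (simp add: vec6_eq_iff algebra_simps)

lemma lie_br_scaleR_right: "lie_br z (k *\<^sub>R x) = k *\<^sub>R lie_br z x"
  by (simp add: vec6_eq_iff algebra_simps)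

lemma span_e_3:
  assumes "i \<noteq> j" "i \<noteq> k" "j \<noteq> k"
  shows "span {e i, e j, e k} = {x. \<forall>l. l \<noteq> i \<and> l \<noteq> j \<and> l \<noteq> k \<longrightarrow> x$l = 0}"
proof
  have "subspace {x::real^6. \<forall>l. l \<noteq> i \<and> l \<noteq> j \<and> l \<noteq> k \<longrightarrow> x$l = 0}"
    by (auto simp: subspace_def)
  then show "span {e i, e j, e k} \<subseteq> {x. \<forall>l. l \<noteq> i \<and> l \<noteq> j \<and> l \<noteq> k \<longrightarrow> x$l = 0}"
    by (rule span_minimal[rotated]) auto
  show "{x. \<forall>l. l \<noteq> i \<and> l \<noteq> j \<and> l \<noteq> k \<longrightarrow> x$l = 0} \<subseteq> span {e i, e j, e k}"
  proof
    fix x :: "real^6" assume "x \<in> {x. \<forall>l. l \<noteq> i \<and> l \<noteq> j \<and> l \<noteq> k \<longrightarrow> x$l = 0}"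
    then have "x = x$i *\<^sub>R e i + x$j *\<^sub>R e j + x$k *\<^sub>R e k"
      using assms by (auto simp: vec_eq_iff)
    also have "\<dots> \<in> span {e i, e j, e k}"
      by (intro span_add span_scale span_base) auto
    finally show "x \<in> span {e i, e j, e k}" .
  qed
qed

lemma span_e126: "span {e 1, e 2, e 6} = {x. x$3 = 0 \<and> x$4 = 0 \<and> x$5 = 0}"
  and span_e234: "span {e 2, e 3, e 4} = {x. x$1 = 0 \<and> x$5 = 0 \<and> x$6 = 0}"
  and span_e456: "span {e 4, e 5, e 6} = {x. x$1 = 0 \<and> x$2 = 0 \<and> x$3 = 0}"
  and span_e156: "span {e 1, e 5, e 6} = {x. x$2 = 0 \<and> x$3 = 0 \<and> x$4 = 0}"
  by (subst span_e_3; simp add: all_6)+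

lemma is_ideal_span_e156: "is_ideal (span {e 1, e 5, e 6})"
  unfolding is_ideal_def span_e156 by (auto simp: subspace_def)

section \<open>The adjoint action\<close>

lemma mat2_nth [simp]:
  "mat2 a b c d $ 1 $ 1 = a" "mat2 a b c d $ 1 $ 2 = b" "mat2 a b c d $ 2 $ 1 = c" "mat2 a b c d $ 2 $ 2 = d"
  by (simp_all add: mat2_def)

lemma mat2_eq_iff:
  "(A::real^2^2) = B \<longleftrightarrow> A$1$1 = B$1$1 \<and> A$1$2 = B$1$2 \<and> A$2$1 = B$2$1 \<and> A$2$2 = B$2$2"
  by (auto simp add: vec_eq_iff forall_2)

lemma matrix_matrix_mult_2_nth [simp]:
  "((A::real^2^2) ** B) $ i $ j = A$i$1 * B$1$j + A$i$2 * B$2$j"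
  by (simp add: matrix_matrix_mult_def sum_2)

lemma matrix_inv_det_1:
  assumes "det (A::real^2^2) = 1"
  shows "matrix_inv A = mat2 (A$2$2) (-A$1$2) (-A$2$1) (A$1$1)"
proof -
  let ?B = "mat2 (A$2$2) (-A$1$2) (-A$2$1) (A$1$1)"
  have "A$1$1 * A$2$2 - A$1$2 * A$2$1 = 1" using assms by (simp add: det_2)
  then have inv: "A ** ?B = mat 1" "?B ** A = mat 1"
    by (auto simp add: mat2_eq_iff mat_def algebra_simps)
  have "C = ?B" if "A ** C = mat 1 \<and> C ** A = mat 1" for C
    by (metis that inv(2) matrix_mul_assoc matrix_mul_lid matrix_mul_rid)
  then show ?thesis unfolding matrix_inv_def using inv by (metis (mono_tags, lifting) someI)
qed

lemma matrix_inv_det_1_mult: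
  assumes "det (A::real^2^2) = 1"
  shows "A ** matrix_inv A = mat 1" "matrix_inv A ** A = mat 1"
  using assms by (simp_all add: matrix_inv_det_1 det_2 mat2_eq_iff mat_def algebra_simps)

text \<open>Both halves of \<open>g\<close> are coordinatised by the basis \<open>H = diag(1,-1)\<close>,
  \<open>S = [0 1; 1 0]\<close>, \<open>K = [0 1; -1 0]\<close> of \<open>sl\<^sub>2(\<real>)\<close>: the factor \<open>sl\<^sub>2\<close> is spanned by
  \<open>e\<^sub>2, e\<^sub>3, e\<^sub>4\<close> and the abelian ideal by \<open>e\<^sub>5 = -H, e\<^sub>6 = S, e\<^sub>1 = -K\<close>.\<close>

definition sl_part :: "real^6 \<Rightarrow> real^3" where
  "sl_part v = vector [v$2, v$3, v$4]"

definition ideal_part :: "real^6 \<Rightarrow> real^3" where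
  "ideal_part v = vector [-v$5, v$6, -v$1]"

definition join_parts :: "real^3 \<Rightarrow> real^3 \<Rightarrow> real^6" where
  "join_parts u w = vec6 (-(w$3)) (u$1) (u$2) (u$3) (-(w$1)) (w$2)"

definition sl_br :: "real^3 \<Rightarrow> real^3 \<Rightarrow> real^3" where
  "sl_br u w = vector [u$3*w$2 - u$2*w$3, u$1*w$3 - u$3*w$1, u$1*w$2 - u$2*w$1]"

lemma sl_part_join_parts [simp]: "sl_part (join_parts u w) = u"
  and ideal_part_join_parts [simp]: "ideal_part (join_parts u w) = w"
  and join_parts_split: "join_parts (sl_part v) (ideal_part v) = v"
  by (simp_all add: sl_part_def ideal_part_def join_parts_def vec3_eq_iff vec6_eq_iff)

lemma lie_br_parts:
  "lie_br x y = join_parts (sl_br (sl_part x) (sl_part y))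
     (sl_br (sl_part x) (ideal_part y) + sl_br (ideal_part x) (sl_part y))"
  by (simp add: vec6_eq_iff join_parts_def sl_br_def sl_part_def ideal_part_def algebra_simps)

text \<open>The adjoint action \<open>U \<mapsto> A U A\<^sup>-\<^sup>1\<close> of \<open>A = [a b; c d]\<close> in the coordinates
  \<open>(p, q, r)\<close> of \<open>p H + q S + r K\<close>, for \<open>det A = 1\<close>.\<close>

definition Ad_H :: "real \<Rightarrow> real \<Rightarrow> real \<Rightarrow> real \<Rightarrow> real \<Rightarrow> real \<Rightarrow> real \<Rightarrow> real" where
  "Ad_H a b c d p q r = (a*d + b*c)*p + (b*d - a*c)*q - (a*c + b*d)*r"

definition Ad_S :: "real \<Rightarrow> real \<Rightarrow> real \<Rightarrow> real \<Rightarrow> real \<Rightarrow> real \<Rightarrow> real \<Rightarrow> real" where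
  "Ad_S a b c d p q r = (c*d - a*b)*p + (a^2-b^2-c^2+d^2)/2*q + (a^2+b^2-c^2-d^2)/2*r"

definition Ad_K :: "real \<Rightarrow> real \<Rightarrow> real \<Rightarrow> real \<Rightarrow> real \<Rightarrow> real \<Rightarrow> real \<Rightarrow> real" where
  "Ad_K a b c d p q r = -(a*b + c*d)*p + (a^2-b^2+c^2-d^2)/2*q + (a^2+b^2+c^2+d^2)/2*r"

definition sl_Ad :: "real^2^2 \<Rightarrow> real^3 \<Rightarrow> real^3" where
  "sl_Ad A u = vector [Ad_H (A$1$1) (A$1$2) (A$2$1) (A$2$2) (u$1) (u$2) (u$3),
                       Ad_S (A$1$1) (A$1$2) (A$2$1) (A$2$2) (u$1) (u$2) (u$3),
                       Ad_K (A$1$1) (A$1$2) (A$2$1) (A$2$2) (u$1) (u$2) (u$3)]"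

lemma sl_Ad_add: "sl_Ad A (u + w) = sl_Ad A u + sl_Ad A w"
  and sl_Ad_scaleR: "sl_Ad A (k *\<^sub>R u) = k *\<^sub>R sl_Ad A u"
  by (simp_all add: vec3_eq_iff sl_Ad_def Ad_H_def Ad_S_def Ad_K_def; simp add: field_simps)+

lemma sl_Ad_mat_1: "sl_Ad (mat 1) u = u"
  by (simp add: vec3_eq_iff sl_Ad_def Ad_H_def Ad_S_def Ad_K_def mat_def)

lemma sl_Ad_mult: "sl_Ad B (sl_Ad A u) = sl_Ad (B ** A) u"
proof -
  have "Ad_H a' b' c' d' (Ad_H a b c d p q r) (Ad_S a b c d p q r) (Ad_K a b c d p q r)
      = Ad_H (a'*a+b'*c) (a'*b+b'*d) (c'*a+d'*c) (c'*b+d'*d) p q r"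
    "Ad_S a' b' c' d' (Ad_H a b c d p q r) (Ad_S a b c d p q r) (Ad_K a b c d p q r)
      = Ad_S (a'*a+b'*c) (a'*b+b'*d) (c'*a+d'*c) (c'*b+d'*d) p q r"
    "Ad_K a' b' c' d' (Ad_H a b c d p q r) (Ad_S a b c d p q r) (Ad_K a b c d p q r)
      = Ad_K (a'*a+b'*c) (a'*b+b'*d) (c'*a+d'*c) (c'*b+d'*d) p q r"
    for a b c d a' b' c' d' p q r
    unfolding Ad_H_def Ad_S_def Ad_K_def by (simp_all add: field_simps power2_eq_square; algebra)+
  then show ?thesis by (simp add: vec3_eq_iff sl_Ad_def)
qed

lemma sl_Ad_sl_br: "sl_br (sl_Ad A u) (sl_Ad A w) = det A *\<^sub>R sl_Ad A (sl_br u w)"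
proof -
  have "Ad_K a b c d p q r * Ad_S a b c d p' q' r' - Ad_S a b c d p q r * Ad_K a b c d p' q' r'
      = (a*d-b*c) * Ad_H a b c d (r*q' - q*r') (p*r' - r*p') (p*q' - q*p')"
    "Ad_H a b c d p q r * Ad_K a b c d p' q' r' - Ad_K a b c d p q r * Ad_H a b c d p' q' r'
      = (a*d-b*c) * Ad_S a b c d (r*q' - q*r') (p*r' - r*p') (p*q' - q*p')"
    "Ad_H a b c d p q r * Ad_S a b c d p' q' r' - Ad_S a b c d p q r * Ad_H a b c d p' q' r'
      = (a*d-b*c) * Ad_K a b c d (r*q' - q*r') (p*r' - r*p') (p*q' - q*p')"
    for a b c d p q r p' q' r'
    unfolding Ad_H_def Ad_S_def Ad_K_def by (simp_all add: field_simps power2_eq_square; algebra)+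
  then show ?thesis by (simp add: vec3_eq_iff sl_br_def sl_Ad_def det_2)
qed

definition Ad_SL :: "real^2^2 \<Rightarrow> real^6 \<Rightarrow> real^6" where
  "Ad_SL A v = join_parts (sl_Ad A (sl_part v)) (sl_Ad A (ideal_part v))"

lemma sl_part_add: "sl_part (x + y) = sl_part x + sl_part y"
  and ideal_part_add: "ideal_part (x + y) = ideal_part x + ideal_part y"
  and sl_part_scaleR: "sl_part (k *\<^sub>R x) = k *\<^sub>R sl_part x"
  and ideal_part_scaleR: "ideal_part (k *\<^sub>R x) = k *\<^sub>R ideal_part x"
  and join_parts_add: "join_parts u w + join_parts u' w' = join_parts (u + u') (w + w')"
  and join_parts_scaleR: "k *\<^sub>R join_parts u w = join_parts (k *\<^sub>R u) (k *\<^sub>R w)"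
  by (simp_all add: sl_part_def ideal_part_def join_parts_def vec3_eq_iff vec6_eq_iff)

lemma Ad_SL_add: "Ad_SL A (x + y) = Ad_SL A x + Ad_SL A y"
  by (simp add: Ad_SL_def sl_part_add ideal_part_add sl_Ad_add join_parts_add)

lemma Ad_SL_scaleR: "Ad_SL A (k *\<^sub>R x) = k *\<^sub>R Ad_SL A x"
  by (simp add: Ad_SL_def sl_part_scaleR ideal_part_scaleR sl_Ad_scaleR join_parts_scaleR)

lemma Ad_SL_lie_br: "det A = 1 \<Longrightarrow> Ad_SL A (lie_br x y) = lie_br (Ad_SL A x) (Ad_SL A y)"
  by (simp add: lie_br_parts Ad_SL_def sl_Ad_sl_br sl_Ad_add)

lemma Ad_SL_mult: "Ad_SL B (Ad_SL A v) = Ad_SL (B ** A) v"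
  by (simp add: Ad_SL_def sl_Ad_mult)

lemma Ad_SL_mat_1: "Ad_SL (mat 1) v = v"
  by (simp add: Ad_SL_def sl_Ad_mat_1 join_parts_split)

lemma sl_part_Ad_SL: "sl_part (Ad_SL A v) = sl_Ad A (sl_part v)"
  by (simp add: Ad_SL_def)

text \<open>The translation part \<open>X\<close> of \<open>Ad\<close> acts as \<open>exp (ad \<xi>)\<close> = \<open>id + ad \<xi>\<close>
  for the element \<open>\<xi> = transl_vec X\<close> of the abelian ideal.\<close>

definition transl_vec :: "real^2^2 \<Rightarrow> real^6" where
  "transl_vec X = vec6 (X$2$1 - X$1$2) 0 0 0 (-2 * X$1$1) (X$1$2 + X$2$1)"

definition transl_mat :: "real^6 \<Rightarrow> real^2^2" where
  "transl_mat w = mat2 (- w$5 / 2) ((w$6 - w$1)/2) ((w$6 + w$1)/2) (w$5/2)"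

lemma sl_part_transl_vec: "sl_part (transl_vec X) = 0"
  by (simp add: transl_vec_def sl_part_def vec3_eq_iff)

lemma transl_vec_transl_mat: "sl_part w = 0 \<Longrightarrow> transl_vec (transl_mat w) = w"
  and trace_transl_mat: "trace (transl_mat w) = 0"
  by (simp_all add: transl_vec_def transl_mat_def vec6_eq_iff sl_part_def vec3_eq_iff
      trace_def sum_2 field_simps)

lemma Ad_eq_Ad_SL:
  assumes "det A = 1" "trace X = 0"
  shows "Ad A X v = Ad_SL A (v + lie_br (transl_vec X) v)"
proof -
  have X22: "X$2$2 = - X$1$1" using assms(2) by (simp add: trace_def sum_2)
  show ?thesis
    unfolding Ad_def to_pair_def from_pair_def matrix_inv_det_1[OF assms(1)]
    apply (simp add: vector_eq_vec6 vec6_eq_iff Ad_SL_def transl_vec_def X22 join_parts_def sl_Ad_def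
        sl_part_def ideal_part_def Ad_H_def Ad_S_def Ad_K_def)
    apply (simp add: algebra_simps power2_eq_square)
    done
qed

lemma transl_lie_br:
  "sl_part w = 0 \<Longrightarrow> lie_br (x + lie_br w x) (y + lie_br w y) = lie_br x y + lie_br w (lie_br x y)"
  and transl_transl:
  "sl_part w = 0 \<Longrightarrow> sl_part w' = 0 \<Longrightarrow>
     (v + lie_br w' v) + lie_br w (v + lie_br w' v) = v + lie_br (w + w') v"
  by (simp_all add: vec6_eq_iff sl_part_def vec3_eq_iff algebra_simps)

lemma transl_eq_0: "sl_part w = 0 \<Longrightarrow> v + lie_br w v = 0 \<Longrightarrow> v = 0"
  by (auto simp: vec6_eq_iff sl_part_def vec3_eq_iff)

lemma sl_part_transl: "sl_part w = 0 \<Longrightarrow> sl_part (v + lie_br w v) = sl_part v"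
  by (simp add: sl_part_def vec3_eq_iff)

lemma Ad_mult:
  assumes A: "det A = 1" "trace X = 0" and B: "det B = 1" "trace Y = 0"
  shows "Ad B Y (Ad A X v) = Ad (B ** A) (transl_mat (transl_vec X + Ad_SL (matrix_inv A) (transl_vec Y))) v"
proof -
  let ?z = "Ad_SL (matrix_inv A) (transl_vec Y)"
  have z: "sl_part ?z = 0" by (simp add: sl_part_Ad_SL sl_part_transl_vec vec3_eq_iff sl_Ad_def
        Ad_H_def Ad_S_def Ad_K_def)
  have "Ad_SL A ?z = transl_vec Y" by (simp add: Ad_SL_mult matrix_inv_det_1_mult A Ad_SL_mat_1)
  then have "Ad B Y (Ad A X v) = Ad_SL B (Ad_SL A
      ((v + lie_br (transl_vec X) v) + lie_br ?z (v + lie_br (transl_vec X) v)))"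
    using A B by (simp add: Ad_eq_Ad_SL Ad_SL_add Ad_SL_lie_br)
  also have "\<dots> = Ad_SL (B ** A) (v + lie_br (transl_vec X + ?z) v)"
    by (simp add: transl_transl[OF z sl_part_transl_vec] Ad_SL_mult add.commute)
  finally show ?thesis
    using A B z by (simp add: Ad_eq_Ad_SL det_mul trace_transl_mat transl_vec_transl_mat
        sl_part_add sl_part_transl_vec)
qed

lemma Ad_comp_Ad:
  assumes "det A = 1" "trace X = 0" "det B = 1" "trace Y = 0"
  obtains C Z where "det C = 1" "trace Z = 0" "\<And>v. Ad C Z v = Ad B Y (Ad A X v)"
  using Ad_mult[OF assms] assms det_mul trace_transl_mat by (metis mult_1)

lemma Ad_mat_1: "Ad (mat 1) (transl_mat 0) v = v"
  by (simp add: Ad_eq_Ad_SL det_I trace_transl_mat transl_vec_transl_mat Ad_SL_mat_1 sl_part_def vec3_eq_iff)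

lemma Ad_transl_mat: "sl_part w = 0 \<Longrightarrow> Ad (mat 1) (transl_mat w) v = v + lie_br w v"
  by (simp add: Ad_eq_Ad_SL det_I trace_transl_mat transl_vec_transl_mat Ad_SL_mat_1)

lemma linear_Ad: "det A = 1 \<Longrightarrow> trace X = 0 \<Longrightarrow> linear (Ad A X)"
  by (rule linearI)
    (simp_all add: Ad_eq_Ad_SL Ad_SL_add Ad_SL_scaleR lie_br_add_right lie_br_scaleR_right algebra_simps)

lemma Ad_lie_br:
  "det A = 1 \<Longrightarrow> trace X = 0 \<Longrightarrow> Ad A X (lie_br x y) = lie_br (Ad A X x) (Ad A X y)"
  by (simp add: Ad_eq_Ad_SL transl_lie_br[OF sl_part_transl_vec, symmetric] Ad_SL_lie_br)

lemma bij_Ad: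
  assumes "det A = 1" "trace X = 0"
  shows "bij (Ad A X)"
proof -
  have "v = 0" if "Ad A X v = 0" for v
  proof -
    have "v + lie_br (transl_vec X) v = Ad_SL (matrix_inv A) (Ad A X v)"
      using assms by (simp add: Ad_eq_Ad_SL Ad_SL_mult matrix_inv_det_1_mult Ad_SL_mat_1)
    also have "\<dots> = 0" using that Ad_SL_scaleR[of _ 0 0] by simp
    finally show "v = 0" using transl_eq_0[OF sl_part_transl_vec] by blast
  qed
  then have "inj (Ad A X)" using linear_Ad[OF assms] by (simp add: linear_injective_0)
  then show ?thesis by (simp add: bij_def linear_inj_imp_surj[OF linear_Ad[OF assms]])
qed

lemma sl_part_Ad: "det A = 1 \<Longrightarrow> trace X = 0 \<Longrightarrow> sl_part (Ad A X v) = sl_Ad A (sl_part v)"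
  by (simp add: Ad_eq_Ad_SL sl_part_Ad_SL sl_part_transl sl_part_transl_vec)

text \<open>The determinant of the \<open>sl\<^sub>2\<close>-component \<open>[x\<^sub>2  x\<^sub>3+x\<^sub>4; x\<^sub>3-x\<^sub>4  -x\<^sub>2]\<close>; it is negative,
  positive or zero according as that component is hyperbolic, elliptic or nilpotent.\<close>

definition sl_det :: "real^6 \<Rightarrow> real" where
  "sl_det v = v$4^2 - v$2^2 - v$3^2"

lemma sl_det_sl_Ad:
  "Ad_K a b c d p q r ^ 2 - Ad_H a b c d p q r ^ 2 - Ad_S a b c d p q r ^ 2
    = (a*d-b*c)^2 * (r^2 - p^2 - q^2)"
  unfolding Ad_H_def Ad_S_def Ad_K_def by (simp add: field_simps power2_eq_square; algebra)

lemma sl_det_Ad: "det A = 1 \<Longrightarrow> trace X = 0 \<Longrightarrow> sl_det (Ad A X v) = sl_det v"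
  by (simp add: Ad_eq_Ad_SL sl_det_def Ad_SL_def join_parts_def sl_Ad_def sl_part_def
      ideal_part_def sl_det_sl_Ad[simplified] det_2 transl_vec_def)

section \<open>Conjugacy classes of elements with non-zero \<open>sl\<^sub>2\<close>-part\<close>

lemma conj_by_sl_Ad_and_transl:
  assumes A: "det A = 1" and u: "sl_Ad A (sl_part x) = u"
    and transl: "\<And>v. sl_part v = u \<Longrightarrow> \<exists>w c. sl_part w = 0 \<and> v + lie_br w v = F c"
  obtains B Y c where "det B = 1" "trace Y = 0" "Ad B Y x = F c"
proof -
  have X0: "trace (transl_mat 0) = 0" by (rule trace_transl_mat)
  obtain w c where w: "sl_part w = 0" "Ad A (transl_mat 0) x + lie_br w (Ad A (transl_mat 0) x) = F c"
    using transl sl_part_Ad[OF A X0] u by metis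
  obtain B Y where B: "det B = 1" "trace Y = 0"
    "\<And>v. Ad B Y v = Ad (mat 1) (transl_mat w) (Ad A (transl_mat 0) v)"
    by (rule Ad_comp_Ad[OF A X0 det_I trace_transl_mat[of w]]) blast
  have "Ad B Y x = F c" using B(3) Ad_transl_mat[OF w(1)] w(2) by simp
  then show thesis using that B(1,2) by blast
qed

text \<open>Here \<open>p, q, r\<close> are the entries of the \<open>sl\<^sub>2\<close>-component \<open>[p q; r -p]\<close> of \<open>x\<close>.\<close>

lemma sl_Ad_hyperbolic:
  assumes "sl_det x < 0"
  obtains A \<mu> where "det A = 1" "\<mu> \<noteq> 0" "sl_Ad A (sl_part x) = vector [\<mu>, 0, 0]"
proof -
  define p q r where "p = x$2" and "q = x$3 + x$4" and "r = x$3 - x$4"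
  note p_q_r_def = p_def q_def r_def
  have pos: "p^2 + q*r > 0"
    using assms by (simp add: sl_det_def p_q_r_def algebra_simps power2_eq_square)
  define l where "l = sqrt (p^2 + q*r)"
  have l: "l > 0" "l * l = p^2 + q*r" using pos by (simp_all add: l_def)
  have x: "x$2 = p" "x$3 = (q + r)/2" "x$4 = (q - r)/2" by (simp_all add: p_q_r_def)
  show thesis
  proof (cases "r = 0")
    case False
    let ?A = "mat2 r (l - p) (-1/(2*l)) ((l+p)/(2*l*r))"
    have "det ?A = 1" using False l by (simp add: det_2 field_simps)
    moreover have "sl_Ad ?A (sl_part x) = vector [l, 0, 0]"
      using False l unfolding vec3_eq_iff sl_Ad_def sl_part_def
      by (simp add: x Ad_H_def Ad_S_def Ad_K_def field_simps power2_eq_square; algebra)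
    moreover have "l \<noteq> 0" using l by simp
    ultimately show thesis using that by blast
  next
    case True
    then have p: "p \<noteq> 0" using pos by auto
    let ?A = "mat2 1 (q/(2*p)) 0 1"
    have "det ?A = 1" by (simp add: det_2)
    moreover have "sl_Ad ?A (sl_part x) = vector [p, 0, 0]"
      using True p unfolding vec3_eq_iff sl_Ad_def sl_part_def
      by (simp add: x Ad_H_def Ad_S_def Ad_K_def field_simps power2_eq_square; algebra)
    ultimately show thesis using p that by blast
  qed
qed

lemma sl_Ad_elliptic:
  assumes "sl_det x > 0"
  obtains A \<mu> where "det A = 1" "\<mu> \<noteq> 0" "sl_Ad A (sl_part x) = vector [0, 0, \<mu>]"
proof -
  define p q r where "p = x$2" and "q = x$3 + x$4" and "r = x$3 - x$4"
  note p_q_r_def = p_def q_def r_def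
  have neg: "-(p^2 + q*r) > 0"
    using assms by (simp add: sl_det_def p_q_r_def algebra_simps power2_eq_square)
  define w where "w = sqrt (-(p^2 + q*r))"
  have w: "w > 0" "w * w = -(p^2 + q*r)" using neg by (simp_all add: w_def)
  have x: "x$2 = p" "x$3 = (q + r)/2" "x$4 = (q - r)/2" by (simp_all add: p_q_r_def)
  have q: "q \<noteq> 0" using neg by (auto simp: power2_eq_square)
  show thesis
  proof (cases "q > 0")
    case True
    define s where "s = sqrt (w / q)"
    have s: "s > 0" "s * s = w / q" using w True by (simp_all add: s_def)
    let ?A = "mat2 s 0 ((p/q)/s) (1/s)"
    have "det ?A = 1" using s by (simp add: det_2)
    moreover have "sl_Ad ?A (sl_part x) = vector [0, 0, w]"
      using q s w unfolding vec3_eq_iff sl_Ad_def sl_part_def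
      by (simp add: x Ad_H_def Ad_S_def Ad_K_def field_simps power2_eq_square; algebra)
    moreover have "w \<noteq> 0" using w by simp
    ultimately show thesis using that by blast
  next
    case False
    then have q_neg: "q < 0" using q by simp
    define s where "s = sqrt (- w / q)"
    have s: "s > 0" "s * s = - w / q" using w q_neg by (simp_all add: s_def divide_pos_neg)
    let ?A = "mat2 s 0 ((p/q)/s) (1/s)"
    have "det ?A = 1" using s by (simp add: det_2)
    moreover have "sl_Ad ?A (sl_part x) = vector [0, 0, -w]"
      using q s w unfolding vec3_eq_iff sl_Ad_def sl_part_def
      by (simp add: x Ad_H_def Ad_S_def Ad_K_def field_simps power2_eq_square; algebra)
    moreover have "-w \<noteq> 0" using w by simp
    ultimately show thesis using that by blast
  qed
qed

lemma sl_Ad_parabolic: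
  assumes "sl_det x = 0" "sl_part x \<noteq> 0"
  obtains A \<mu> where "det A = 1" "\<mu> \<noteq> 0" "sl_Ad A (sl_part x) = vector [0, \<mu>, \<mu>]"
proof -
  define p q r where "p = x$2" and "q = x$3 + x$4" and "r = x$3 - x$4"
  note p_q_r_def = p_def q_def r_def
  have z: "p^2 + q*r = 0"
    using assms by (simp add: sl_det_def p_q_r_def algebra_simps power2_eq_square)
  have x: "x$2 = p" "x$3 = (q + r)/2" "x$4 = (q - r)/2" by (simp_all add: p_q_r_def)
  show thesis
  proof (cases "q = 0")
    case False
    let ?A = "mat2 1 0 (p/q) 1"
    have "det ?A = 1" by (simp add: det_2)
    moreover have "sl_Ad ?A (sl_part x) = vector [0, q/2, q/2]"
      using False z unfolding vec3_eq_iff sl_Ad_def sl_part_def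
      by (simp add: x Ad_H_def Ad_S_def Ad_K_def field_simps power2_eq_square; algebra)
    moreover have "q/2 \<noteq> 0" using False by simp
    ultimately show thesis using that by blast
  next
    case True
    then have "p = 0" using z by simp
    then have r: "r \<noteq> 0" using assms(2) True x by (auto simp: sl_part_def vec3_eq_iff)
    let ?A = "mat2 0 1 (-1) 0"
    have "det ?A = 1" by (simp add: det_2)
    moreover have "sl_Ad ?A (sl_part x) = vector [0, -r/2, -r/2]"
      using True \<open>p = 0\<close> unfolding vec3_eq_iff sl_Ad_def sl_part_def
      by (simp add: x Ad_H_def Ad_S_def Ad_K_def field_simps power2_eq_square)
    moreover have "-r/2 \<noteq> 0" using r by simp
    ultimately show thesis using that by blast
  qed
qed

lemma conj_hyperbolic:
  assumes "sl_det x < 0"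
  obtains A X \<mu> c where "det A = 1" "trace X = 0" "\<mu> \<noteq> 0" "Ad A X x = \<mu> *\<^sub>R (e 2 + c *\<^sub>R e 5)"
proof -
  obtain A \<mu> where A: "det A = 1" "\<mu> \<noteq> 0" "sl_Ad A (sl_part x) = vector [\<mu>, 0, 0]"
    using sl_Ad_hyperbolic[OF assms] .
  have "\<exists>w c. sl_part w = 0 \<and> v + lie_br w v = \<mu> *\<^sub>R (e 2 + c *\<^sub>R e 5)"
    if "sl_part v = vector [\<mu>, 0, 0]" for v
    using that A(2)
    by (intro exI[of _ "vec6 (- v$6/\<mu>) 0 0 0 0 (- v$1/\<mu>)"] exI[of _ "v$5/\<mu>"])
      (simp add: vec6_eq_iff sl_part_def vec3_eq_iff field_simps)
  then obtain B Y c where "det B = 1" "trace Y = 0" "Ad B Y x = \<mu> *\<^sub>R (e 2 + c *\<^sub>R e 5)"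
    by (rule conj_by_sl_Ad_and_transl[OF A(1,3), where F = "\<lambda>c. \<mu> *\<^sub>R (e 2 + c *\<^sub>R e 5)"]) blast
  then show thesis using that A(2) by blast
qed

lemma conj_elliptic:
  assumes "sl_det x > 0"
  obtains A X \<mu> c where "det A = 1" "trace X = 0" "\<mu> \<noteq> 0" "Ad A X x = \<mu> *\<^sub>R (e 4 + c *\<^sub>R e 1)"
proof -
  obtain A \<mu> where A: "det A = 1" "\<mu> \<noteq> 0" "sl_Ad A (sl_part x) = vector [0, 0, \<mu>]"
    using sl_Ad_elliptic[OF assms] .
  have "\<exists>w c. sl_part w = 0 \<and> v + lie_br w v = \<mu> *\<^sub>R (e 4 + c *\<^sub>R e 1)"
    if "sl_part v = vector [0, 0, \<mu>]" for v
    using that A(2)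
    by (intro exI[of _ "vec6 0 0 0 0 (v$6/\<mu>) (- v$5/\<mu>)"] exI[of _ "v$1/\<mu>"])
      (simp add: vec6_eq_iff sl_part_def vec3_eq_iff field_simps)
  then obtain B Y c where "det B = 1" "trace Y = 0" "Ad B Y x = \<mu> *\<^sub>R (e 4 + c *\<^sub>R e 1)"
    by (rule conj_by_sl_Ad_and_transl[OF A(1,3), where F = "\<lambda>c. \<mu> *\<^sub>R (e 4 + c *\<^sub>R e 1)"]) blast
  then show thesis using that A(2) by blast
qed

lemma conj_parabolic:
  assumes "sl_det x = 0" "sl_part x \<noteq> 0"
  obtains A X \<mu> c where "det A = 1" "trace X = 0" "\<mu> \<noteq> 0"
    "Ad A X x = \<mu> *\<^sub>R (e 3 + e 4 + c *\<^sub>R (e 1 + e 6))"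
proof -
  obtain A \<mu> where A: "det A = 1" "\<mu> \<noteq> 0" "sl_Ad A (sl_part x) = vector [0, \<mu>, \<mu>]"
    using sl_Ad_parabolic[OF assms] .
  have "\<exists>w c. sl_part w = 0 \<and> v + lie_br w v = \<mu> *\<^sub>R (e 3 + e 4 + c *\<^sub>R (e 1 + e 6))"
    if "sl_part v = vector [0, \<mu>, \<mu>]" for v
    using that A(2)
    by (intro exI[of _ "vec6 (- v$5/\<mu>) 0 0 0 (-(v$1 - v$6)/(2*\<mu>)) 0"] exI[of _ "(v$1 + v$6)/(2*\<mu>)"])
      (simp add: vec6_eq_iff sl_part_def vec3_eq_iff field_simps)
  then obtain B Y c where "det B = 1" "trace Y = 0" "Ad B Y x = \<mu> *\<^sub>R (e 3 + e 4 + c *\<^sub>R (e 1 + e 6))"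
    by (rule conj_by_sl_Ad_and_transl[OF A(1,3), where F = "\<lambda>c. \<mu> *\<^sub>R (e 3 + e 4 + c *\<^sub>R (e 1 + e 6))"]) blast
  then show thesis using that A(2) by blast
qed

section \<open>Generalised eigenspaces of a hyperbolic element\<close>

lemma lie_br_hyperbolic:
  "lie_br (e 2 + c *\<^sub>R e 5) x = vec6 (c*x$3 - x$6) 0 (x$4) (x$3) 0 (-x$1 - c*x$4)"
  by (simp add: vec6_eq_iff)

text \<open>For \<open>s = \<plusminus>1\<close>, \<open>eig_proj s\<close> is the projection onto the generalised \<open>s\<close>-eigenspace
  \<open>span {eig_p s, eig_q s}\<close> of \<open>ad (e\<^sub>2 + c e\<^sub>5)\<close>, along the other eigenspace and the
  kernel \<open>span {e\<^sub>2, e\<^sub>5}\<close>; for \<open>c \<noteq> 0\<close> it is a Jordan block with \<open>eig_q s \<mapsto> s eig_q s + c eig_p s\<close>.\<close>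

definition eig_p :: "real \<Rightarrow> real^6" where "eig_p s = e 1 - s *\<^sub>R e 6"

definition eig_q :: "real \<Rightarrow> real^6" where "eig_q s = e 3 + s *\<^sub>R e 4"

definition eig_proj :: "real \<Rightarrow> real^6 \<Rightarrow> real^6" where
  "eig_proj s x =
     vec6 ((x$1 - s*x$6)/2) 0 ((x$3 + s*x$4)/2) (s*(x$3 + s*x$4)/2) 0 (-s*(x$1 - s*x$6)/2)"

lemma eig_proj_poly:
  fixes s c :: real
  assumes "s \<in> {-1, 1}"
  defines "D \<equiv> lie_br (e 2 + c *\<^sub>R e 5)"
  shows "eig_proj s x = (1/2) *\<^sub>R (2 *\<^sub>R D (D x) - D (D (D (D x))))
    + (s/4) *\<^sub>R (3 *\<^sub>R D x - D (D (D x)))"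
  using assms(1) unfolding D_def lie_br_hyperbolic by (auto simp: vec6_eq_iff eig_proj_def field_simps)

lemma eig_proj_mem:
  assumes "s \<in> {-1, 1}" "subspace S" "\<And>x. x \<in> S \<Longrightarrow> lie_br (e 2 + c *\<^sub>R e 5) x \<in> S" "x \<in> S"
  shows "eig_proj s x \<in> S"
  unfolding eig_proj_poly[OF assms(1), of x c]
  using assms(2-4) by (intro subspace_add subspace_diff subspace_scale) auto

lemma eig_proj_add: "eig_proj s (x + y) = eig_proj s x + eig_proj s y"
  by (simp add: eig_proj_def vec6_eq_iff field_simps)

lemma eig_proj_decomp: "eig_proj s z = (eig_proj s z $ 1) *\<^sub>R eig_p s + (eig_proj s z $ 3) *\<^sub>R eig_q s"
  by (simp add: eig_proj_def eig_p_def eig_q_def vec6_eq_iff field_simps)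

lemma eig_proj_eig_p: "s \<in> {-1, 1} \<Longrightarrow> eig_proj s (eig_p s) = eig_p s"
  and eig_proj_eig_q: "s \<in> {-1, 1} \<Longrightarrow> eig_proj s (eig_q s) = eig_q s"
  by (auto simp: eig_proj_def eig_p_def eig_q_def vec6_eq_iff)

lemma eig_p_neq_0: "eig_p s \<noteq> 0"
  by (simp add: eig_p_def vec6_eq_iff)

lemma eig_proj_sum: "x - eig_proj 1 x - eig_proj (-1) x = x$2 *\<^sub>R e 2 + x$5 *\<^sub>R e 5"
  by (simp add: eig_proj_def vec6_eq_iff field_simps)

lemma eig_proj_nth:
  "eig_proj 1 x $ 2 = 0" "eig_proj 1 x $ 5 = 0" "eig_proj 1 x $ 4 = eig_proj 1 x $ 3"
  "eig_proj 1 x $ 6 = - eig_proj 1 x $ 1"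
  "eig_proj (-1) x $ 2 = 0" "eig_proj (-1) x $ 5 = 0" "eig_proj (-1) x $ 4 = - eig_proj (-1) x $ 3"
  "eig_proj (-1) x $ 6 = eig_proj (-1) x $ 1"
  by (simp_all add: eig_proj_def field_simps)

lemma lie_br_in_other_block:
  assumes "s \<in> {-1, 1}" "eig_proj s x = 0" "eig_proj s y = 0"
  shows "lie_br x y = (lie_br x y $ 1) *\<^sub>R eig_p (-s) + (lie_br x y $ 3) *\<^sub>R eig_q (-s)"
proof -
  have "x$6 = s * x$1" "x$4 = - s * x$3" "y$6 = s * y$1" "y$4 = - s * y$3"
    using assms by (auto simp: eig_proj_def vec6_eq_iff)
  then show ?thesis using assms(1) by (auto simp: eig_p_def eig_q_def vec6_eq_iff algebra_simps)
qed

lemma eig_blocks_pairwise_orthogonal: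
  "pairwise orthogonal {eig_p 1, eig_q 1, eig_p (-1), eig_q (-1)}"
  "card {eig_p 1, eig_q 1, eig_p (-1), eig_q (-1)} = 4"
  "0 \<notin> {eig_p 1, eig_q 1, eig_p (-1), eig_q (-1)}"
  by (auto simp: pairwise_insert orthogonal_def inner_vec6 eig_p_def eig_q_def vec6_eq_iff)

lemma not_all_eig_blocks:
  assumes "dim S = 3" "eig_p 1 \<in> S" "eig_q 1 \<in> S" "eig_p (-1) \<in> S" "eig_q (-1) \<in> S"
  shows False
  using card_le_dim_if_pairwise_orthogonal[OF eig_blocks_pairwise_orthogonal(1,3), of S]
    eig_blocks_pairwise_orthogonal(2) assms by simp

lemma lie_br_elliptic:
  "lie_br (e 4 + c *\<^sub>R e 1) x = vec6 0 (x$3) (-x$2) 0 (c*x$3 - x$6) (c*x$2 + x$5)"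
  by (simp add: vec6_eq_iff)

lemma lie_br_parabolic:
  assumes "x$2 = 0" "x$4 = x$3"
  shows "lie_br (e 3 + e 4 + c *\<^sub>R (e 1 + e 6)) x
    = (-(x$1 + x$6 - 2*c*x$3)) *\<^sub>R e 5 + x$5 *\<^sub>R (e 6 - e 1)"
  using assms by (simp add: vec6_eq_iff algebra_simps)

lemma four_orthogonal_e:
  assumes "dim S = 3" "e 1 \<in> S" "e 5 \<in> S" "e 6 \<in> S" "v \<in> S" "v$1 = 0" "v$5 = 0" "v$6 = 0" "v \<noteq> 0"
  shows False
proof -
  have "v \<noteq> e 1" "v \<noteq> e 5" "v \<noteq> e 6" using assms(6-8) by (auto simp: vec6_eq_iff)
  then have "card {e 1, e 5, e 6, v} = 4" by (simp add: vec6_eq_iff)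
  moreover have "pairwise orthogonal {e 1, e 5, e 6, v}"
    using assms(6-8) by (auto simp: pairwise_insert orthogonal_def inner_vec6)
  moreover have "0 \<notin> {e 1, e 5, e 6, v}" using assms(9) by (auto simp: vec6_eq_iff)
  ultimately show False
    using card_le_dim_if_pairwise_orthogonal[of "{e 1, e 5, e 6, v}" S] assms(1-5) by auto
qed

section \<open>Reductive pairs\<close>

definition normal_form :: "(real^6) set \<Rightarrow> (real^6) set \<Rightarrow> bool" where
  "normal_form h m \<longleftrightarrow>
     (\<exists>b2 b3. h = span {e 1, e 2, e 6} \<and>
        m = span {e 5, e 3 - b3 *\<^sub>R e 1 - b2 *\<^sub>R e 6, e 4 + b2 *\<^sub>R e 1 + b3 *\<^sub>R e 6})
   \<or> (\<exists>a. a \<noteq> 0 \<and> h = span {e 2, e 3, e 4} \<and>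
        m = span {e 1 + a *\<^sub>R e 4, e 6 - a *\<^sub>R e 3, e 5 + a *\<^sub>R e 2})
   \<or> (\<exists>b1 b2. h = span {e 4, e 5, e 6} \<and>
        m = span {e 1, e 2 + b1 *\<^sub>R e 6 + b2 *\<^sub>R e 5, e 3 - b2 *\<^sub>R e 6 + b1 *\<^sub>R e 5})"

definition conj_to_normal_form :: "(real^6) set \<Rightarrow> (real^6) set \<Rightarrow> bool" where
  "conj_to_normal_form h m \<longleftrightarrow>
     (\<exists>A X. det A = 1 \<and> trace X = 0 \<and> normal_form (Ad A X ` h) (Ad A X ` m))"

lemma conj_to_normal_formI: "normal_form h m \<Longrightarrow> conj_to_normal_form h m"
  unfolding conj_to_normal_form_def
  by (rule exI[of _ "mat 1"], rule exI[of _ "transl_mat 0"]) (simp add: Ad_mat_1 trace_transl_mat det_I)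

lemma conj_to_normal_form_Ad_image:
  assumes A: "det A = 1" "trace X = 0" and conj: "conj_to_normal_form (Ad A X ` h) (Ad A X ` m)"
  shows "conj_to_normal_form h m"
proof -
  obtain B Y where B: "det B = 1" "trace Y = 0"
    and nf: "normal_form (Ad B Y ` Ad A X ` h) (Ad B Y ` Ad A X ` m)"
    using conj unfolding conj_to_normal_form_def by blast
  obtain C Z where C: "det C = 1" "trace Z = 0" "\<And>v. Ad C Z v = Ad B Y (Ad A X v)"
    by (rule Ad_comp_Ad[OF A B]) blast
  have "Ad B Y ` Ad A X ` S = Ad C Z ` S" for S using C(3) by (simp add: image_image)
  then show ?thesis unfolding conj_to_normal_form_def using nf C(1,2) by metis
qed

lemma generates_image:
  assumes lin: "linear f" and surj: "surj f" and hom: "\<And>x y. f (lie_br x y) = lie_br (f x) (f y)"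
    and gen: "generates M"
  shows "generates (f ` M)"
  unfolding generates_def
proof (intro allI impI)
  fix S assume S: "is_subalgebra S \<and> f ` M \<subseteq> S"
  have "is_subalgebra (f -` S)"
    using S unfolding is_subalgebra_def by (auto simp: linear_subspace_vimage[OF lin] hom)
  moreover have "M \<subseteq> f -` S" using S by blast
  ultimately have "f -` S = UNIV" using gen unfolding generates_def by blast
  then show "S = UNIV" using surj_image_vimage_eq[OF surj, of S] surj by simp
qed

locale reductive_pair =
  fixes h m :: "(real^6) set"
  assumes h_subalgebra: "is_subalgebra h" and dim_h: "dim h = 3"
    and m_subspace: "subspace m" and dim_m: "dim m = 3"
    and h_inter_m: "h \<inter> m = {0}" and h_plus_m: "{x + y | x y. x \<in> h \<and> y \<in> m} = UNIV"
    and m_generates: "generates m"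
    and lie_br_h_m: "\<forall>x\<in>h. \<forall>y\<in>m. lie_br x y \<in> m"
begin

lemma h_subspace: "subspace h"
  using h_subalgebra by (simp add: is_subalgebra_def)

lemma lie_br_hh: "x \<in> h \<Longrightarrow> y \<in> h \<Longrightarrow> lie_br x y \<in> h"
  using h_subalgebra by (simp add: is_subalgebra_def)

lemma lie_br_hm: "x \<in> h \<Longrightarrow> y \<in> m \<Longrightarrow> lie_br x y \<in> m"
  using lie_br_h_m by blast

lemma in_h_in_m_eq_0: "x \<in> h \<Longrightarrow> x \<in> m \<Longrightarrow> x = 0"
  using h_inter_m by blast

lemma decompose:
  obtains a b where "a \<in> h" "b \<in> m" "x = a + b"
  using h_plus_m by blast

lemma m_not_subalgebra: "\<not> is_subalgebra m"
proof
  assume "is_subalgebra m"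
  then have "h \<subseteq> span {}" using m_generates h_inter_m unfolding generates_def by auto
  then show False using dim_le_card[of h "{}"] dim_h by simp
qed

lemma reductive_pair_Ad_image:
  assumes A: "det A = 1" "trace X = 0"
  shows "reductive_pair (Ad A X ` h) (Ad A X ` m)"
proof -
  let ?f = "Ad A X"
  have lin: "linear ?f" and inj: "inj ?f" and surj: "surj ?f"
    and hom: "\<And>x y. ?f (lie_br x y) = lie_br (?f x) (?f y)"
    using linear_Ad[OF A] bij_Ad[OF A] Ad_lie_br[OF A] by (auto simp: bij_def)
  have "is_subalgebra (?f ` h)"
    using h_subalgebra unfolding is_subalgebra_def
    by (auto simp: linear_subspace_image[OF lin] hom[symmetric])
  moreover have "dim (?f ` h) = 3" "dim (?f ` m) = 3"
    using dim_image_eq[OF lin] inj dim_h dim_m by (metis inj_on_subset subset_UNIV)+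
  moreover have "subspace (?f ` m)" using linear_subspace_image[OF lin m_subspace] .
  moreover have "?f ` h \<inter> ?f ` m = {0}"
  proof -
    have "?f ` h \<inter> ?f ` m = ?f ` (h \<inter> m)" by (simp add: image_Int[OF inj])
    then show ?thesis using h_inter_m linear_0[OF lin] by simp
  qed
  moreover have "{x + y | x y. x \<in> ?f ` h \<and> y \<in> ?f ` m} = UNIV"
  proof -
    have "z \<in> {x + y | x y. x \<in> ?f ` h \<and> y \<in> ?f ` m}" for z
    proof -
      obtain w where w: "z = ?f w" using surj by (metis surjD)
      obtain a b where ab: "a \<in> h" "b \<in> m" "w = a + b" by (rule decompose)
      have "z = ?f a + ?f b" using w ab(3) linear_add[OF lin] by simp
      then show ?thesis using ab(1,2) by blast
    qed
    then show ?thesis by blast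
  qed
  moreover have "generates (?f ` m)" using generates_image[OF lin surj hom m_generates] .
  moreover have "\<forall>x\<in>?f ` h. \<forall>y\<in>?f ` m. lie_br x y \<in> ?f ` m"
    using lie_br_h_m by (auto simp: hom[symmetric])
  ultimately show ?thesis unfolding reductive_pair_def by blast
qed

lemma image_Ad_contains:
  assumes "det A = 1" "trace X = 0" "x \<in> h" "Ad A X x = \<mu> *\<^sub>R v" "\<mu> \<noteq> 0"
  shows "v \<in> Ad A X ` h"
proof -
  interpret conj: reductive_pair "Ad A X ` h" "Ad A X ` m" by (rule reductive_pair_Ad_image[OF assms(1,2)])
  show ?thesis using subspace_scaleR_cancel[OF conj.h_subspace] assms(3-5) by (metis image_eqI)
qed

lemma coordinate_complement:
  assumes h: "h = {x. x$i = 0 \<and> x$j = 0 \<and> x$k = 0}" and ijk: "i \<noteq> j" "i \<noteq> k" "j \<noteq> k"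
  obtains bi bj bk where "bi \<in> m" "bj \<in> m" "bk \<in> m"
    "bi$i = 1" "bi$j = 0" "bi$k = 0" "bj$i = 0" "bj$j = 1" "bj$k = 0" "bk$i = 0" "bk$j = 0" "bk$k = 1"
    "\<And>x. x \<in> m \<Longrightarrow> x = x$i *\<^sub>R bi + x$j *\<^sub>R bj + x$k *\<^sub>R bk"
    "m = span {bi, bj, bk}"
proof -
  have lift: "\<exists>b\<in>m. b$i = e l $ i \<and> b$j = e l $ j \<and> b$k = e l $ k" for l
  proof -
    obtain a b where ab: "a \<in> h" "b \<in> m" "e l = a + b" by (rule decompose)
    then have "b = e l - a" by simp
    then show ?thesis using ab h by auto
  qed
  obtain bi where "bi \<in> m" "bi$i = 1" "bi$j = 0" "bi$k = 0" using lift[of i] ijk by auto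
  moreover obtain bj where "bj \<in> m" "bj$i = 0" "bj$j = 1" "bj$k = 0" using lift[of j] ijk by auto
  moreover obtain bk where "bk \<in> m" "bk$i = 0" "bk$j = 0" "bk$k = 1" using lift[of k] ijk by auto
  ultimately have b: "bi \<in> m" "bj \<in> m" "bk \<in> m"
    and coords: "bi$i = 1" "bi$j = 0" "bi$k = 0" "bj$i = 0" "bj$j = 1" "bj$k = 0"
      "bk$i = 0" "bk$j = 0" "bk$k = 1"
    by blast+
  have rep: "x = x$i *\<^sub>R bi + x$j *\<^sub>R bj + x$k *\<^sub>R bk" if "x \<in> m" for x
  proof -
    let ?r = "x - (x$i *\<^sub>R bi + x$j *\<^sub>R bj + x$k *\<^sub>R bk)"
    have "?r \<in> m" using that b m_subspace by (intro subspace_diff subspace_add subspace_scale) auto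
    moreover have "?r \<in> h" using h coords by simp
    ultimately have "?r = 0" using in_h_in_m_eq_0 by blast
    then show ?thesis by simp
  qed
  have "m = span {bi, bj, bk}"
  proof
    show "m \<subseteq> span {bi, bj, bk}"
    proof
      fix x assume "x \<in> m"
      then have "x = x$i *\<^sub>R bi + x$j *\<^sub>R bj + x$k *\<^sub>R bk" by (rule rep)
      also have "\<dots> \<in> span {bi, bj, bk}" by (intro span_add span_scale span_base) auto
      finally show "x \<in> span {bi, bj, bk}" .
    qed
    show "span {bi, bj, bk} \<subseteq> m" using b m_subspace by (intro span_minimal) auto
  qed
  with b coords rep show thesis by (rule that)
qed

lemma normal_form_I:
  assumes "h = span {e 1, e 2, e 6}"
  shows "normal_form h m"
proof -
  have h: "h = {x. x$3 = 0 \<and> x$4 = 0 \<and> x$5 = 0}" using assms span_e126 by simp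
  obtain b3 b4 b5 where b: "b3 \<in> m" "b4 \<in> m" "b5 \<in> m"
    and coords: "b3$3 = 1" "b3$4 = 0" "b3$5 = 0" "b4$3 = 0" "b4$4 = 1" "b4$5 = 0"
      "b5$3 = 0" "b5$4 = 0" "b5$5 = 1"
    and rep: "\<And>x. x \<in> m \<Longrightarrow> x = x$3 *\<^sub>R b3 + x$4 *\<^sub>R b4 + x$5 *\<^sub>R b5"
    and m: "m = span {b3, b4, b5}"
    by (rule coordinate_complement[OF h]) simp_all
  have e12: "e 1 \<in> h" "e 2 \<in> h" using h by simp_all
  have "lie_br (e 1) b5 = 0" "lie_br (e 2) b5 = 0" "lie_br (e 2) b3 = b4" "lie_br (e 2) b4 = b3"
    using rep[OF lie_br_hm[OF e12(1) b(3)]] rep[OF lie_br_hm[OF e12(2) b(3)]]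
      rep[OF lie_br_hm[OF e12(2) b(1)]] rep[OF lie_br_hm[OF e12(2) b(2)]] coords by simp_all
  then have "b5 = e 5" "b3 = e 3 - (- b3$1) *\<^sub>R e 1 - (- b3$6) *\<^sub>R e 6"
    "b4 = e 4 + (- b3$6) *\<^sub>R e 1 + (- b3$1) *\<^sub>R e 6"
    using coords by (auto simp: vec6_eq_iff)
  then have "m = span {e 5, e 3 - (- b3$1) *\<^sub>R e 1 - (- b3$6) *\<^sub>R e 6,
      e 4 + (- b3$6) *\<^sub>R e 1 + (- b3$1) *\<^sub>R e 6}"
    using m by (simp add: insert_commute)
  then show ?thesis unfolding normal_form_def using assms by blast
qed

lemma normal_form_II:
  assumes "h = span {e 2, e 3, e 4}"
  shows "normal_form h m"
proof -
  have h: "h = {x. x$1 = 0 \<and> x$5 = 0 \<and> x$6 = 0}" using assms span_e234 by simp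
  obtain b1 b5 b6 where b: "b1 \<in> m" "b5 \<in> m" "b6 \<in> m"
    and coords: "b1$1 = 1" "b1$5 = 0" "b1$6 = 0" "b5$1 = 0" "b5$5 = 1" "b5$6 = 0"
      "b6$1 = 0" "b6$5 = 0" "b6$6 = 1"
    and rep: "\<And>x. x \<in> m \<Longrightarrow> x = x$1 *\<^sub>R b1 + x$5 *\<^sub>R b5 + x$6 *\<^sub>R b6"
    and m: "m = span {b1, b5, b6}"
    by (rule coordinate_complement[OF h]) simp_all
  have e234: "e 2 \<in> h" "e 3 \<in> h" "e 4 \<in> h" using h by simp_all
  have "lie_br (e 2) b1 = - b6" "lie_br (e 3) b1 = - b5" "lie_br (e 4) b1 = 0"
    "lie_br (e 2) b5 = 0" "lie_br (e 3) b6 = 0"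
    using rep[OF lie_br_hm[OF e234(1) b(1)]] rep[OF lie_br_hm[OF e234(2) b(1)]]
      rep[OF lie_br_hm[OF e234(3) b(1)]] rep[OF lie_br_hm[OF e234(1) b(2)]]
      rep[OF lie_br_hm[OF e234(2) b(3)]] coords by simp_all
  then have b_eq: "b1 = e 1 + b1$4 *\<^sub>R e 4" "b6 = e 6 - b1$4 *\<^sub>R e 3" "b5 = e 5 + b1$4 *\<^sub>R e 2"
    using coords by (auto simp: vec6_eq_iff)
  have "b1$4 \<noteq> 0"
  proof
    assume "b1$4 = 0"
    then have "m = span {e 1, e 5, e 6}" using m b_eq by simp
    then show False using m_not_subalgebra is_ideal_span_e156
      by (simp add: is_ideal_def is_subalgebra_def)
  qed
  moreover have "m = span {e 1 + b1$4 *\<^sub>R e 4, e 6 - b1$4 *\<^sub>R e 3, e 5 + b1$4 *\<^sub>R e 2}"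
    using m b_eq by (simp add: insert_commute)
  ultimately show ?thesis unfolding normal_form_def using assms by blast
qed

lemma normal_form_III:
  assumes "h = span {e 4, e 5, e 6}"
  shows "normal_form h m"
proof -
  have h: "h = {x. x$1 = 0 \<and> x$2 = 0 \<and> x$3 = 0}" using assms span_e456 by simp
  obtain b1 b2 b3 where b: "b1 \<in> m" "b2 \<in> m" "b3 \<in> m"
    and coords: "b1$1 = 1" "b1$2 = 0" "b1$3 = 0" "b2$1 = 0" "b2$2 = 1" "b2$3 = 0"
      "b3$1 = 0" "b3$2 = 0" "b3$3 = 1"
    and rep: "\<And>x. x \<in> m \<Longrightarrow> x = x$1 *\<^sub>R b1 + x$2 *\<^sub>R b2 + x$3 *\<^sub>R b3"
    and m: "m = span {b1, b2, b3}"
    by (rule coordinate_complement[OF h]) simp_all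
  have e45: "e 4 \<in> h" "e 5 \<in> h" using h by simp_all
  have "lie_br (e 4) b1 = 0" "lie_br (e 5) b1 = 0" "lie_br (e 4) b2 = - b3" "lie_br (e 5) b2 = 0"
    using rep[OF lie_br_hm[OF e45(1) b(1)]] rep[OF lie_br_hm[OF e45(2) b(1)]]
      rep[OF lie_br_hm[OF e45(1) b(2)]] rep[OF lie_br_hm[OF e45(2) b(2)]] coords by simp_all
  then have "b1 = e 1" "b2 = e 2 + b2$6 *\<^sub>R e 6 + b2$5 *\<^sub>R e 5"
    "b3 = e 3 - b2$5 *\<^sub>R e 6 + b2$6 *\<^sub>R e 5"
    using coords by (auto simp: vec6_eq_iff)
  then have "m = span {e 1, e 2 + b2$6 *\<^sub>R e 6 + b2$5 *\<^sub>R e 5, e 3 - b2$5 *\<^sub>R e 6 + b2$6 *\<^sub>R e 5}"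
    using m by simp
  then show ?thesis unfolding normal_form_def using assms by blast
qed

text \<open>On the block \<open>span {eig_p s, eig_q s}\<close>, \<open>T\<close> kills \<open>eig_p s\<close> and sends \<open>eig_q s\<close> to it;
  applying \<open>T\<close> to the \<open>h \<oplus> m\<close>-decomposition of \<open>eig_q s\<close> puts \<open>eig_p s\<close> into \<open>h\<close> or into \<open>m\<close>.\<close>

lemma eig_block_in_h_or_m:
  assumes s: "s \<in> {-1, 1}"
    and P: "\<And>x. x \<in> h \<Longrightarrow> eig_proj s x \<in> h" "\<And>x. x \<in> m \<Longrightarrow> eig_proj s x \<in> m"
    and T: "\<And>x. x \<in> h \<Longrightarrow> T x \<in> h" "\<And>x. x \<in> m \<Longrightarrow> T x \<in> m"
    and T_eig_proj: "\<And>z. T (eig_proj s z) = (eig_proj s z $ 3) *\<^sub>R eig_p s"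
  shows "(eig_p s \<in> h \<and> eig_q s \<in> h) \<or> (eig_p s \<in> m \<and> eig_q s \<in> m)"
proof -
  let ?p = "eig_p s" and ?q = "eig_q s"
  obtain a' b' where ab': "a' \<in> h" "b' \<in> m" "?q = a' + b'" by (rule decompose)
  define a b where "a = eig_proj s a'" and "b = eig_proj s b'"
  have a: "a \<in> h" and b: "b \<in> m" using P ab' by (simp_all add: a_def b_def)
  have q: "?q = a + b" using ab'(3) eig_proj_eig_q[OF s] eig_proj_add by (metis a_def b_def)
  define \<alpha> where "\<alpha> = a $ 3"
  have b3: "b $ 3 = 1 - \<alpha>" using arg_cong[OF q, of "\<lambda>v. v $ 3"] by (simp add: \<alpha>_def eig_q_def)
  have a_eq: "a = a$1 *\<^sub>R ?p + \<alpha> *\<^sub>R ?q" and b_eq: "b = b$1 *\<^sub>R ?p + (1 - \<alpha>) *\<^sub>R ?q"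
    using eig_proj_decomp b3 by (metis a_def b_def \<alpha>_def)+
  have ph: "\<alpha> *\<^sub>R ?p \<in> h" using T(1)[OF a] T_eig_proj by (metis a_def \<alpha>_def)
  have pm: "(1 - \<alpha>) *\<^sub>R ?p \<in> m" using T(2)[OF b] T_eig_proj b3 by (metis b_def)
  consider "\<alpha> = 1" | "\<alpha> = 0" | "\<alpha> \<noteq> 0" "\<alpha> \<noteq> 1" by blast
  then show ?thesis
  proof cases
    case 1
    then have "?p \<in> h" using ph by simp
    then have "b \<in> h" using subspace_scale[OF h_subspace, of ?p "b$1"] b_eq 1 by simp
    then have "b = 0" using b in_h_in_m_eq_0 by blast
    then show ?thesis using \<open>?p \<in> h\<close> q a by simp
  next
    case 2
    then have "?p \<in> m" using pm by simp
    then have "a \<in> m" using subspace_scale[OF m_subspace, of ?p "a$1"] a_eq 2 by simp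
    then have "a = 0" using a in_h_in_m_eq_0 by blast
    then show ?thesis using \<open>?p \<in> m\<close> q b by simp
  next
    case 3
    have "?p \<in> h" using subspace_scale[OF h_subspace ph, of "1/\<alpha>"] 3 by simp
    moreover have "?p \<in> m" using subspace_scale[OF m_subspace pm, of "1/(1 - \<alpha>)"] 3 by simp
    ultimately show ?thesis using in_h_in_m_eq_0 eig_p_neq_0 by blast
  qed
qed

lemma eig_proj_h_m:
  assumes "e 2 + c *\<^sub>R e 5 \<in> h" "s \<in> {-1, 1}"
  shows "x \<in> h \<Longrightarrow> eig_proj s x \<in> h" "x \<in> m \<Longrightarrow> eig_proj s x \<in> m"
  using eig_proj_mem[OF assms(2) h_subspace] eig_proj_mem[OF assms(2) m_subspace]
    lie_br_hh[OF assms(1)] lie_br_hm[OF assms(1)] by blast+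

lemma eig_block_hyperbolic:
  assumes y: "e 2 + c *\<^sub>R e 5 \<in> h" and s: "s \<in> {-1, 1}" and "c \<noteq> 0 \<or> e 5 \<in> h"
  shows "(eig_p s \<in> h \<and> eig_q s \<in> h) \<or> (eig_p s \<in> m \<and> eig_q s \<in> m)"
  using assms(3)
proof
  assume c: "c \<noteq> 0"
  let ?T = "\<lambda>x. (1/c) *\<^sub>R (lie_br (e 2 + c *\<^sub>R e 5) x - s *\<^sub>R x)"
  show ?thesis
  proof (rule eig_block_in_h_or_m[OF s eig_proj_h_m[OF y s], of ?T])
    show "?T x \<in> h" if "x \<in> h" for x
      using that lie_br_hh[OF y] h_subspace by (intro subspace_scale subspace_diff) auto
    show "?T x \<in> m" if "x \<in> m" for x
      using that lie_br_hm[OF y] m_subspace by (intro subspace_scale subspace_diff) auto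
    show "?T (eig_proj s z) = (eig_proj s z $ 3) *\<^sub>R eig_p s" for z
      using c s by (auto simp: vec6_eq_iff eig_proj_def eig_p_def field_simps)
  qed
next
  assume e5: "e 5 \<in> h"
  show ?thesis
  proof (rule eig_block_in_h_or_m[OF s eig_proj_h_m[OF y s], of "lie_br (e 5)"])
    show "lie_br (e 5) (eig_proj s z) = (eig_proj s z $ 3) *\<^sub>R eig_p s" for z
      using s by (auto simp: vec6_eq_iff eig_proj_def eig_p_def field_simps)
  qed (use lie_br_hh[OF e5] lie_br_hm[OF e5] in auto)
qed

lemma eig_blocks_split_False:
  assumes y: "e 2 + c *\<^sub>R e 5 \<in> h" and s: "s \<in> {-1, 1}"
    and h: "eig_p s \<in> h" "eig_q s \<in> h" and m: "eig_p (-s) \<in> m" "eig_q (-s) \<in> m"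
  shows False
proof -
  have "eig_proj s x = 0" if "x \<in> m" for x
  proof -
    have "eig_proj s x \<in> h"
      using eig_proj_decomp[of s x] h h_subspace by (metis subspace_add subspace_scale)
    then show ?thesis using eig_proj_h_m(2)[OF y s that] in_h_in_m_eq_0 by blast
  qed
  then have "is_subalgebra m"
    unfolding is_subalgebra_def
    using lie_br_in_other_block[OF s] m m_subspace by (metis subspace_add subspace_scale)
  then show False using m_not_subalgebra by blast
qed

lemma hyperbolic_False:
  assumes y: "e 2 + c *\<^sub>R e 5 \<in> h" and c_e5: "c \<noteq> 0 \<or> e 5 \<in> h"
  shows False
proof -
  have pm: "(-1::real) \<in> {-1, 1}" "(1::real) \<in> {-1, 1}" by simp_all
  have B: "(eig_p 1 \<in> h \<and> eig_q 1 \<in> h) \<or> (eig_p 1 \<in> m \<and> eig_q 1 \<in> m)"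
    "(eig_p (-1) \<in> h \<and> eig_q (-1) \<in> h) \<or> (eig_p (-1) \<in> m \<and> eig_q (-1) \<in> m)"
    using eig_block_hyperbolic[OF y pm(2) c_e5] eig_block_hyperbolic[OF y pm(1) c_e5] by blast+
  show False
  proof (cases "e 5 \<in> h")
    case True
    have "\<not> (eig_p s \<in> h \<and> eig_q s \<in> h)" if "s \<in> {-1, 1}" for s
    proof
      assume "eig_p s \<in> h \<and> eig_q s \<in> h"
      moreover have "e 2 \<in> h" using y True h_subspace
        by (metis add_diff_cancel subspace_diff subspace_scale)
      moreover have "pairwise orthogonal {e 2, e 5, eig_p s, eig_q s}"
        "0 \<notin> {e 2, e 5, eig_p s, eig_q s}" "card {e 2, e 5, eig_p s, eig_q s} = 4"
        using that by (auto simp: pairwise_insert orthogonal_def inner_vec6 eig_p_def eig_q_def vec6_eq_iff)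
      ultimately show False
        using card_le_dim_if_pairwise_orthogonal[of "{e 2, e 5, eig_p s, eig_q s}" h] True dim_h by auto
    qed
    then show False using B pm not_all_eig_blocks[OF dim_m] by blast
  next
    case False
    have "\<not> (eig_p 1 \<in> h \<and> eig_q 1 \<in> h \<and> eig_p (-1) \<in> m \<and> eig_q (-1) \<in> m)"
      "\<not> (eig_p (-1) \<in> h \<and> eig_q (-1) \<in> h \<and> eig_p 1 \<in> m \<and> eig_q 1 \<in> m)"
      using eig_blocks_split_False[OF y pm(2)] eig_blocks_split_False[OF y pm(1)] by auto
    then show False using B not_all_eig_blocks[OF dim_h] not_all_eig_blocks[OF dim_m] by blast
  qed
qed

lemma coord_5_eq_0:
  assumes e2: "e 2 \<in> h" and e5: "e 5 \<notin> h" and x: "x \<in> h"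
  shows "x$5 = 0"
proof (rule ccontr)
  assume x5: "x$5 \<noteq> 0"
  have y: "e 2 + 0 *\<^sub>R e 5 \<in> h" using e2 by simp
  have "x - eig_proj 1 x - eig_proj (-1) x - x$2 *\<^sub>R e 2 \<in> h"
    using x e2 eig_proj_h_m(1)[OF y, of 1 x] eig_proj_h_m(1)[OF y, of "-1" x] h_subspace
    by (intro subspace_diff subspace_scale) auto
  then have "x$5 *\<^sub>R e 5 \<in> h" by (simp add: eig_proj_sum)
  then show False using subspace_scaleR_cancel[OF h_subspace] x5 e5 by blast
qed

lemma ex_eig_proj_neq_0:
  assumes e2: "e 2 \<in> h" and e5: "e 5 \<notin> h" and s: "s \<in> {-1, 1}"
  shows "\<exists>x\<in>h. eig_proj s x \<noteq> 0"
proof (rule ccontr)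
  assume "\<not> ?thesis"
  then have P0: "\<And>x. x \<in> h \<Longrightarrow> eig_proj s x = 0" by blast
  have y: "e 2 + 0 *\<^sub>R e 5 \<in> h" using e2 by simp
  have s': "-s \<in> {-1, 1}" using s by auto
  have "x \<in> span {e 2, eig_p (-s), eig_q (-s)}" if x: "x \<in> h" for x
  proof -
    have "x = eig_proj (-s) x + x$2 *\<^sub>R e 2"
      using eig_proj_sum[of x] P0[OF x] coord_5_eq_0[OF e2 e5 x] s by (auto simp: algebra_simps)
    also have "\<dots> = x$2 *\<^sub>R e 2 + (eig_proj (-s) x $ 1) *\<^sub>R eig_p (-s) + (eig_proj (-s) x $ 3) *\<^sub>R eig_q (-s)"
      using eig_proj_decomp[of "-s" x] by simp
    also have "\<dots> \<in> span {e 2, eig_p (-s), eig_q (-s)}"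
      by (intro span_add span_scale span_base) auto
    finally show ?thesis .
  qed
  then have "h = span {e 2, eig_p (-s), eig_q (-s)}"
    by (intro subspace_eq_span_3[OF h_subspace dim_h] subsetI)
  then have h_block: "eig_p (-s) \<in> h" "eig_q (-s) \<in> h" by (simp_all add: span_base)
  have "v \<in> m" if "eig_proj s v = v" for v
  proof -
    obtain a b where "a \<in> h" "b \<in> m" "v = a + b" by (rule decompose)
    then have "v = eig_proj s b" using that eig_proj_add P0 by (metis add_0)
    then show ?thesis using eig_proj_h_m(2)[OF y s \<open>b \<in> m\<close>] by simp
  qed
  then have "eig_p s \<in> m" "eig_q s \<in> m" using eig_proj_eig_p[OF s] eig_proj_eig_q[OF s] by blast+
  then show False using eig_blocks_split_False[OF y s' h_block] by simp
qed

text \<open>Conjugation by the translation \<open>transl_mat (-t e\<^sub>5)\<close> maps this subspace onto \<open>\<langle>e\<^sub>2, e\<^sub>3, e\<^sub>4\<rangle>\<close>.\<close>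

lemma conj_to_normal_form_if_translate_e234:
  assumes hW: "h \<subseteq> {x. x$5 = 0 \<and> x$1 = t * x$3 \<and> x$6 = - t * x$4}"
  shows "conj_to_normal_form h m"
proof -
  let ?w = "- t *\<^sub>R e 5"
  have w: "sl_part ?w = 0" by (simp add: sl_part_def vec3_eq_iff)
  have A: "det (mat 1 :: real^2^2) = 1" "trace (transl_mat ?w) = 0" by (simp_all add: det_I trace_transl_mat)
  interpret conj: reductive_pair "Ad (mat 1) (transl_mat ?w) ` h" "Ad (mat 1) (transl_mat ?w) ` m"
    by (rule reductive_pair_Ad_image[OF A])
  have "Ad (mat 1) (transl_mat ?w) x \<in> span {e 2, e 3, e 4}" if "x \<in> h" for x
    using hW that unfolding Ad_transl_mat[OF w] span_e234 by auto
  then have "Ad (mat 1) (transl_mat ?w) ` h \<subseteq> span {e 2, e 3, e 4}" by blast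
  then have "Ad (mat 1) (transl_mat ?w) ` h = span {e 2, e 3, e 4}"
    by (rule subspace_eq_span_3[OF conj.h_subspace conj.dim_h])
  then show ?thesis using conj.normal_form_II conj_to_normal_formI conj_to_normal_form_Ad_image[OF A] by blast
qed

lemma conj_to_normal_form_if_e2_in_h:
  assumes e2: "e 2 \<in> h" and e5: "e 5 \<notin> h"
  shows "conj_to_normal_form h m"
proof -
  have y: "e 2 + 0 *\<^sub>R e 5 \<in> h" using e2 by simp
  obtain x1 where x1: "x1 \<in> h" "eig_proj 1 x1 \<noteq> 0" using ex_eig_proj_neq_0[OF e2 e5, of 1] by auto
  obtain x2 where x2: "x2 \<in> h" "eig_proj (-1) x2 \<noteq> 0" using ex_eig_proj_neq_0[OF e2 e5, of "-1"] by auto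
  define u u' where "u = eig_proj 1 x1" and "u' = eig_proj (-1) x2"
  have uh: "u \<in> h" "u' \<in> h" using eig_proj_h_m(1)[OF y] x1 x2 by (simp_all add: u_def u'_def)
  have uc: "u$2 = 0" "u$5 = 0" "u$4 = u$3" "u$6 = - u$1"
    "u'$2 = 0" "u'$5 = 0" "u'$4 = - u'$3" "u'$6 = u'$1"
    unfolding u_def u'_def by (rule eig_proj_nth)+
  have u0: "u \<noteq> 0" "u' \<noteq> 0" using x1 x2 by (simp_all add: u_def u'_def)
  have hE: "h = span {u, u', e 2}"
    using uh e2 u0 uc
    by (intro subspace_eq_span_orthogonal_3[OF h_subspace dim_h]) (auto simp: orthogonal_def inner_vec6 vec6_eq_iff)
  have "lie_br u u' $ 5 = 0" using coord_5_eq_0[OF e2 e5 lie_br_hh[OF uh]] .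
  then have rel: "u$1 * u'$3 = u$3 * u'$1" using uc by (simp add: algebra_simps)
  consider "u$3 = 0" "u'$3 = 0" | "u$3 \<noteq> 0" "u'$3 \<noteq> 0" | "(u$3 = 0) \<noteq> (u'$3 = 0)" by blast
  then show ?thesis
  proof cases
    case 1
    have "{u, u', e 2} \<subseteq> span {e 1, e 2, e 6}" using 1 uc by (auto simp: span_e126)
    then have "h \<subseteq> span {e 1, e 2, e 6}" unfolding hE by (simp add: span_minimal)
    then have "h = span {e 1, e 2, e 6}" by (rule subspace_eq_span_3[OF h_subspace dim_h])
    then show ?thesis using normal_form_I conj_to_normal_formI by blast
  next
    case 2
    define t where "t = u$1 / u$3"
    have t: "u$1 = t * u$3" "u'$1 = t * u'$3" using 2 rel by (simp_all add: t_def field_simps)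
    let ?W = "{x::real^6. x$5 = 0 \<and> x$1 = t * x$3 \<and> x$6 = - t * x$4}"
    have "subspace ?W" by (auto simp: subspace_def algebra_simps)
    moreover have "{u, u', e 2} \<subseteq> ?W" using uc t by auto
    ultimately have "h \<subseteq> ?W" unfolding hE by (simp add: span_minimal)
    then show ?thesis by (rule conj_to_normal_form_if_translate_e234)
  next
    case 3
    then show ?thesis using rel uc u0 by (auto simp: vec6_eq_iff)
  qed
qed

lemma hyperbolic_case:
  assumes y: "e 2 + c *\<^sub>R e 5 \<in> h"
  shows "conj_to_normal_form h m"
proof (cases "c \<noteq> 0 \<or> e 5 \<in> h")
  case True
  then show ?thesis using hyperbolic_False[OF y] by blast
next
  case False
  then show ?thesis using conj_to_normal_form_if_e2_in_h y by simp
qed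

lemma elliptic_sl_part:
  assumes y: "e 4 + c *\<^sub>R e 1 \<in> h" and nonneg: "\<forall>x\<in>h. sl_det x \<ge> 0" and x: "x \<in> h"
  shows "x$2 = 0" "x$3 = 0"
proof -
  let ?D = "lie_br (e 4 + c *\<^sub>R e 1)"
  have "(-2) *\<^sub>R ?D (?D x) - ?D (?D (?D (?D x))) \<in> h"
    using lie_br_hh[OF y] x h_subspace by (meson subspace_diff subspace_scale)
  moreover have "(-2) *\<^sub>R ?D (?D x) - ?D (?D (?D (?D x))) = vec6 0 (x$2) (x$3) 0 (x$5) (x$6)"
    unfolding lie_br_elliptic by (simp add: vec6_eq_iff)
  ultimately have "sl_det (vec6 0 (x$2) (x$3) 0 (x$5) (x$6)) \<ge> 0" using nonneg by metis
  then have "x$2^2 + x$3^2 \<le> 0" by (simp add: sl_det_def)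
  then show "x$2 = 0" "x$3 = 0" by (simp_all add: sum_power2_le_zero_iff)
qed

lemma elliptic_coords:
  assumes y: "e 4 + c *\<^sub>R e 1 \<in> h" and nonneg: "\<forall>x\<in>h. sl_det x \<ge> 0"
  shows "e 5 \<in> h" "e 6 \<in> h" "\<And>x. x \<in> h \<Longrightarrow> x$1 = c * x$4"
proof -
  let ?D = "lie_br (e 4 + c *\<^sub>R e 1)"
  note sl = elliptic_sl_part[OF y nonneg]
  have "\<exists>x\<in>h. x$5 \<noteq> 0 \<or> x$6 \<noteq> 0"
  proof (rule ccontr)
    assume "\<not> ?thesis"
    then have "x = x$1 *\<^sub>R e 1 + x$4 *\<^sub>R e 4" if "x \<in> h" for x
      using that sl[OF that] by (auto simp: vec6_eq_iff)
    then have "h \<subseteq> span {e 1, e 4}" by (metis subsetI span_add span_scale span_base insertI1 insertI2)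
    moreover have "card {e 1, e 4} = 2" by (simp add: vec6_eq_iff)
    ultimately show False using dim_le_card[of h "{e 1, e 4}"] dim_h by simp
  qed
  then obtain x where x: "x \<in> h" "x$5 \<noteq> 0 \<or> x$6 \<noteq> 0" by blast
  define n where "n = x$5^2 + x$6^2"
  have n: "n \<noteq> 0" using x(2) by (simp add: n_def)
  have D: "?D x \<in> h" "?D (?D x) \<in> h" using lie_br_hh[OF y] x(1) by blast+
  have "n *\<^sub>R e 5 = (- x$6) *\<^sub>R ?D x - x$5 *\<^sub>R ?D (?D x)" "n *\<^sub>R e 6 = x$5 *\<^sub>R ?D x - x$6 *\<^sub>R ?D (?D x)"
    unfolding lie_br_elliptic using sl[OF x(1)] by (simp_all add: vec6_eq_iff n_def power2_eq_square)
  then have "n *\<^sub>R e 5 \<in> h" "n *\<^sub>R e 6 \<in> h" using D h_subspace by (metis subspace_diff subspace_scale)+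
  then show e5: "e 5 \<in> h" and e6: "e 6 \<in> h" using subspace_scaleR_cancel[OF h_subspace] n by blast+
  show "x$1 = c * x$4" if x: "x \<in> h" for x
  proof (rule ccontr)
    assume ne: "x$1 \<noteq> c * x$4"
    have "x - x$4 *\<^sub>R (e 4 + c *\<^sub>R e 1) - x$5 *\<^sub>R e 5 - x$6 *\<^sub>R e 6 \<in> h"
      using x y e5 e6 h_subspace by (intro subspace_diff subspace_scale) auto
    moreover have "x - x$4 *\<^sub>R (e 4 + c *\<^sub>R e 1) - x$5 *\<^sub>R e 5 - x$6 *\<^sub>R e 6 = (x$1 - c * x$4) *\<^sub>R e 1"
      using sl[OF x] by (simp add: vec6_eq_iff)
    ultimately have e1: "e 1 \<in> h" using subspace_scaleR_cancel[OF h_subspace] ne by auto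
    then have "e 4 \<in> h" using y h_subspace by (metis add_diff_cancel subspace_diff subspace_scale)
    then show False using four_orthogonal_e[OF dim_h e1 e5 e6 \<open>e 4 \<in> h\<close>] by (simp add: vec6_eq_iff)
  qed
qed

lemma elliptic_case:
  assumes y: "e 4 + c *\<^sub>R e 1 \<in> h" and nonneg: "\<forall>x\<in>h. sl_det x \<ge> 0"
  shows "conj_to_normal_form h m"
proof -
  let ?D = "lie_br (e 4 + c *\<^sub>R e 1)"
  note sl = elliptic_sl_part[OF y nonneg] and coords = elliptic_coords[OF y nonneg]
  have "x \<in> span {e 4 + c *\<^sub>R e 1, e 5, e 6}" if "x \<in> h" for x
  proof -
    have "x = x$4 *\<^sub>R (e 4 + c *\<^sub>R e 1) + x$5 *\<^sub>R e 5 + x$6 *\<^sub>R e 6"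
      using sl[OF that] coords(3)[OF that] by (simp add: vec6_eq_iff)
    also have "\<dots> \<in> span {e 4 + c *\<^sub>R e 1, e 5, e 6}" by (intro span_add span_scale span_base) auto
    finally show ?thesis .
  qed
  then have hE: "h = span {e 4 + c *\<^sub>R e 1, e 5, e 6}" by (intro subspace_eq_span_3[OF h_subspace dim_h] subsetI)
  have "c = 0"
  proof (rule ccontr)
    assume c: "c \<noteq> 0"
    obtain a b where ab: "a \<in> h" "b \<in> m" "e 2 = a + b" by (rule decompose)
    have "?D (?D (?D b)) + ?D b \<in> m" using lie_br_hm[OF y] ab(2) m_subspace by (meson subspace_add)
    moreover have "?D (?D (?D b)) + ?D b = (-2 * c) *\<^sub>R e 6"
      using ab(3) sl[OF ab(1)] coords(3)[OF ab(1)] unfolding lie_br_elliptic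
      by (simp add: vec6_eq_iff eq_diff_eq[symmetric])
    ultimately have "(-2 * c) *\<^sub>R e 6 \<in> m" by metis
    then have "e 6 \<in> m" by (rule subspace_scaleR_cancel[OF m_subspace]) (use c in simp)
    then show False using in_h_in_m_eq_0[OF coords(2)] by (simp add: vec6_eq_iff)
  qed
  then show ?thesis using hE normal_form_III conj_to_normal_formI by simp
qed

lemma parabolic_coords:
  assumes y: "e 3 + e 4 + c *\<^sub>R (e 1 + e 6) \<in> h" and null: "\<forall>x\<in>h. sl_det x = 0"
    and x: "x \<in> h"
  shows "x$2 = 0" "x$4 = x$3"
proof -
  have "sl_det (x + (e 3 + e 4 + c *\<^sub>R (e 1 + e 6))) = 0" using null h_subspace x y by (simp add: subspace_add)
  moreover have "sl_det x = 0" using null x by blast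
  ultimately show "x$4 = x$3" by (simp add: sl_det_def power2_eq_square algebra_simps)
  with \<open>sl_det x = 0\<close> show "x$2 = 0" by (simp add: sl_det_def)
qed

lemma parabolic_coords_relation:
  assumes y: "e 3 + e 4 + c *\<^sub>R (e 1 + e 6) \<in> h" and null: "\<forall>x\<in>h. sl_det x = 0"
    and x: "x \<in> h"
  shows "x$1 + x$6 - 2*c*x$3 = 0"
proof (rule ccontr)
  assume s: "x$1 + x$6 - 2*c*x$3 \<noteq> 0"
  let ?y = "e 3 + e 4 + c *\<^sub>R (e 1 + e 6)" and ?f = "e 6 - e 1"
  let ?D = "lie_br ?y" and ?s = "\<lambda>x. x$1 + x$6 - 2*c*x$3"
  note coords = parabolic_coords[OF y null x]
  have "?D (?D x) = (- ?s x) *\<^sub>R ?f" using coords by (simp add: lie_br_parabolic)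
  moreover have "?D (?D x) \<in> h" using lie_br_hh[OF y] x by blast
  ultimately have f: "?f \<in> h" using subspace_scaleR_cancel[OF h_subspace] s by auto
  have "?D x - x$5 *\<^sub>R ?f \<in> h" using lie_br_hh[OF y x] f h_subspace by (metis subspace_diff subspace_scale)
  then have e5: "e 5 \<in> h"
    using lie_br_parabolic[OF coords] subspace_scaleR_cancel[OF h_subspace] s by auto
  have "x - x$3 *\<^sub>R ?y - x$5 *\<^sub>R e 5 + (x$1 - c * x$3) *\<^sub>R ?f \<in> h"
    using subspace_add[OF h_subspace subspace_diff[OF h_subspace subspace_diff[OF h_subspace x
        subspace_scale[OF h_subspace y]] subspace_scale[OF h_subspace e5]] subspace_scale[OF h_subspace f]] .
  moreover have "x - x$3 *\<^sub>R ?y - x$5 *\<^sub>R e 5 + (x$1 - c * x$3) *\<^sub>R ?f = ?s x *\<^sub>R e 6"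
    using coords by (simp add: vec6_eq_iff algebra_simps)
  ultimately have e6: "e 6 \<in> h" using subspace_scaleR_cancel[OF h_subspace] s by auto
  have e1: "e 1 \<in> h" using subspace_diff[OF h_subspace e6 f] by simp
  have "?y - c *\<^sub>R e 1 - c *\<^sub>R e 6 \<in> h"
    using subspace_diff[OF h_subspace subspace_diff[OF h_subspace y subspace_scale[OF h_subspace e1]]
        subspace_scale[OF h_subspace e6]] .
  from four_orthogonal_e[OF dim_h e1 e5 e6 this] show False by (simp add: vec6_eq_iff)
qed

lemma parabolic_case:
  assumes y: "e 3 + e 4 + c *\<^sub>R (e 1 + e 6) \<in> h" and null: "\<forall>x\<in>h. sl_det x = 0"
  shows False
proof -
  let ?y = "e 3 + e 4 + c *\<^sub>R (e 1 + e 6)" and ?f = "e 6 - e 1"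
  let ?D = "lie_br ?y" and ?s = "\<lambda>x. x$1 + x$6 - 2*c*x$3"
  note coords = parabolic_coords[OF y null]
  have s0: "\<And>x. x \<in> h \<Longrightarrow> ?s x = 0" using parabolic_coords_relation[OF y null] by blast
  have "x \<in> span {?y, e 5, ?f}" if "x \<in> h" for x
  proof -
    have "x = x$3 *\<^sub>R ?y + x$5 *\<^sub>R e 5 + (c * x$3 - x$1) *\<^sub>R ?f"
      using coords[OF that] s0[OF that] by (simp add: vec6_eq_iff algebra_simps)
    also have "\<dots> \<in> span {?y, e 5, ?f}" by (intro span_add span_scale span_base) auto
    finally show ?thesis .
  qed
  then have "h = span {?y, e 5, ?f}" by (intro subspace_eq_span_3[OF h_subspace dim_h] subsetI)
  then have f: "?f \<in> h" by (simp add: span_base)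
  obtain a b where ab: "a \<in> h" "b \<in> m" "e 1 + e 6 = a + b" by (rule decompose)
  have b: "b = e 1 + e 6 - a" using ab(3) by simp
  have "?D (?D b) \<in> m" using lie_br_hm[OF y] ab(2) by blast
  moreover have "?D (?D b) = (-2) *\<^sub>R ?f"
    using coords[OF ab(1)] s0[OF ab(1)] unfolding b by (simp add: vec6_eq_iff algebra_simps)
  ultimately have "(-2) *\<^sub>R ?f \<in> m" by metis
  then have "?f \<in> m" by (rule subspace_scaleR_cancel[OF m_subspace]) simp
  then show False using in_h_in_m_eq_0[OF f] by (simp add: vec6_eq_iff)
qed

lemma ex_sl_part_neq_0:
  assumes no_ideal: "\<forall>I. is_ideal I \<and> I \<subseteq> h \<longrightarrow> I = {0}"
  shows "\<exists>x\<in>h. sl_part x \<noteq> 0"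
proof (rule ccontr)
  assume "\<not> ?thesis"
  then have "h \<subseteq> span {e 1, e 5, e 6}" by (auto simp: span_e156 sl_part_def vec3_eq_iff)
  then have "h = span {e 1, e 5, e 6}" by (rule subspace_eq_span_3[OF h_subspace dim_h])
  then have "span {e 1, e 5, e 6} = {0}" using no_ideal is_ideal_span_e156 by simp
  then show False using span_base[of "e 1" "{e 1, e 5, e 6}"] by (simp add: vec6_eq_iff)
qed

lemma conj_to_normal_form_if_no_ideal:
  assumes no_ideal: "\<forall>I. is_ideal I \<and> I \<subseteq> h \<longrightarrow> I = {0}"
  shows "conj_to_normal_form h m"
proof -
  obtain x0 where x0: "x0 \<in> h" "sl_part x0 \<noteq> 0" using ex_sl_part_neq_0[OF no_ideal] by blast
  consider (hyperbolic) x where "x \<in> h" "sl_det x < 0"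
    | (elliptic) x where "x \<in> h" "sl_det x > 0" "\<forall>z\<in>h. sl_det z \<ge> 0"
    | (parabolic) "\<forall>z\<in>h. sl_det z = 0"
    by (metis linorder_neqE_linordered_idom not_less)
  then show ?thesis
  proof cases
    case (hyperbolic x)
    obtain A X \<mu> c where A: "det A = 1" "trace X = 0" "\<mu> \<noteq> 0" "Ad A X x = \<mu> *\<^sub>R (e 2 + c *\<^sub>R e 5)"
      using conj_hyperbolic[OF hyperbolic(2)] .
    interpret conj: reductive_pair "Ad A X ` h" "Ad A X ` m" by (rule reductive_pair_Ad_image[OF A(1,2)])
    show ?thesis
      using conj.hyperbolic_case image_Ad_contains[OF A(1,2) hyperbolic(1) A(4,3)]
        conj_to_normal_form_Ad_image[OF A(1,2)] by blast
  next
    case (elliptic x)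
    obtain A X \<mu> c where A: "det A = 1" "trace X = 0" "\<mu> \<noteq> 0" "Ad A X x = \<mu> *\<^sub>R (e 4 + c *\<^sub>R e 1)"
      using conj_elliptic[OF elliptic(2)] .
    interpret conj: reductive_pair "Ad A X ` h" "Ad A X ` m" by (rule reductive_pair_Ad_image[OF A(1,2)])
    have "\<forall>z\<in>Ad A X ` h. sl_det z \<ge> 0" using elliptic(3) sl_det_Ad[OF A(1,2)] by auto
    then show ?thesis
      using conj.elliptic_case image_Ad_contains[OF A(1,2) elliptic(1) A(4,3)]
        conj_to_normal_form_Ad_image[OF A(1,2)] by blast
  next
    case parabolic
    obtain A X \<mu> c where A: "det A = 1" "trace X = 0" "\<mu> \<noteq> 0"
      "Ad A X x0 = \<mu> *\<^sub>R (e 3 + e 4 + c *\<^sub>R (e 1 + e 6))"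
      using conj_parabolic x0 parabolic by blast
    interpret conj: reductive_pair "Ad A X ` h" "Ad A X ` m" by (rule reductive_pair_Ad_image[OF A(1,2)])
    have "\<forall>z\<in>Ad A X ` h. sl_det z = 0" using parabolic sl_det_Ad[OF A(1,2)] by auto
    then show ?thesis
      using conj.parabolic_case image_Ad_contains[OF A(1,2) x0(1) A(4,3)] by blast
  qed
qed

end

theorem lemma18:
  fixes h m :: "(real^6) set"
  assumes h_sub: "is_subalgebra h" and h_dim: "dim h = 3"
    and h_noideal: "\<forall>I. is_ideal I \<and> I \<subseteq> h \<longrightarrow> I = {0}"
    and m_sub: "subspace m" and m_dim: "dim m = 3"
    and compl: "h \<inter> m = {0}" "{x + y | x y. x \<in> h \<and> y \<in> m} = UNIV"
    and m_gen: "generates m"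
    and hm: "\<forall>x\<in>h. \<forall>y\<in>m. lie_br x y \<in> m"
  shows "\<exists>A X. det A = 1 \<and> trace X = 0 \<and>
    ((\<exists>b2 b3. Ad A X ` h = span {e 1, e 2, e 6} \<and>
        Ad A X ` m = span {e 5, e 3 - b3 *\<^sub>R e 1 - b2 *\<^sub>R e 6, e 4 + b2 *\<^sub>R e 1 + b3 *\<^sub>R e 6})
     \<or> (\<exists>a. a \<noteq> 0 \<and> Ad A X ` h = span {e 2, e 3, e 4} \<and>
        Ad A X ` m = span {e 1 + a *\<^sub>R e 4, e 6 - a *\<^sub>R e 3, e 5 + a *\<^sub>R e 2})
     \<or> (\<exists>b1 b2. Ad A X ` h = span {e 4, e 5, e 6} \<and>
        Ad A X ` m = span {e 1, e 2 + b1 *\<^sub>R e 6 + b2 *\<^sub>R e 5, e 3 - b2 *\<^sub>R e 6 + b1 *\<^sub>R e 5}))"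
proof -
  interpret reductive_pair h m
    using h_sub h_dim m_sub m_dim compl m_gen hm by unfold_locales
  show ?thesis
    using conj_to_normal_form_if_no_ideal[OF h_noideal] unfolding conj_to_normal_form_def normal_form_def .
qed

end
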